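(* Fix classes $i\neq j$ with $d_{ij}>0$, an integer $m\ge1$, and assume $M_{4,i},M_{4,j}<\infty$. Let $\Delta:=\|z_i-\widehat\mu_j\|_2^2-\|z_i-\widehat\mu_i\|_2^2$ and suppose $\mathbb E[\Delta]=d_{ij}^2+\frac{v_j-v_i}{m}>0$. For any $\lambda_T,\lambda_S,\lambda_Q>0$, set $\kappa:=\lambda_T+\lambda_S+\lambda_Q$, $a_T:=\frac{4\kappa}{m\lambda_T}$, $a_S:=\frac{\kappa}{m\lambda_S}$, $a_Q:=\frac{\kappa}{m^3\lambda_Q}$. Then \[ \Pr(\Delta\le 0)\le \frac{4\tilde V_{ij}+a_TV_{ij}^2+\bigl(\frac{a_T}{4}+a_S\bigr)V_{ij}+a_Q\bigl(\Theta_{ij}+2(m-1)V_{ij}^2\bigr)}{\bigl(1+\frac{v_j-v_i}{m d_{ij}^2}\bigr)^2}. \]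
   Context: For $c\in\{i,j\}$, $z_c=f(x)$ with $x\sim D_c$ has mean $\mu_c$, covariance $\Sigma_c$, $v_c:=\mathrm{tr}(\Sigma_c)$, $M_{4,c}:=\mathbb E\|z_c-\mu_c\|_2^4$. Support inputs $x_{c,1},\dots,x_{c,m}$ are i.i.d. from $D_c$ for $c\in\{i,j\}$, independent across classes; $\widehat\mu_c:=\frac1m\sum_{s}f(x_{c,s})$. The test point $z_i=f(x_i)$, $x_i\sim D_i$, is independent of the support inputs. $d_{ij}:=\|\mu_j-\mu_i\|_2$, $u_{ij}:=(\mu_j-\mu_i)/d_{ij}$, $\tilde V_{ij}:=\frac{u_{ij}^\top\Sigma_iu_{ij}}{d_{ij}^2}$, $V_{ij}:=\frac{v_i+v_j}{d_{ij}^2}$, $\Theta_{ij}:=\frac{M_{4,i}+M_{4,j}}{d_{ij}^4}$. The probability is over the support sets and the test point. *)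

theory Defs
  imports "HOL-Probability.Probability"
begin

definition feat_mean :: "'x measure \<Rightarrow> ('x \<Rightarrow> 'a::euclidean_space) \<Rightarrow> 'a" where
  "feat_mean D f = (\<integral>x. f x \<partial>D)"

definition feat_cov :: "'x measure \<Rightarrow> ('x \<Rightarrow> 'a::euclidean_space) \<Rightarrow> 'a \<Rightarrow> 'a \<Rightarrow> real" where
  "feat_cov D f u w = (\<integral>x. ((f x - feat_mean D f) \<bullet> u) * ((f x - feat_mean D f) \<bullet> w) \<partial>D)"

definition feat_trcov :: "'x measure \<Rightarrow> ('x \<Rightarrow> 'a::euclidean_space) \<Rightarrow> real" where
  "feat_trcov D f = (\<Sum>b\<in>Basis. feat_cov D f b b)"

definition feat_M4 :: "'x measure \<Rightarrow> ('x \<Rightarrow> 'a::euclidean_space) \<Rightarrow> real" where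
  "feat_M4 D f = (\<integral>x. norm (f x - feat_mean D f) ^ 4 \<partial>D)"

definition emp_mean :: "nat \<Rightarrow> ('x \<Rightarrow> 'a::euclidean_space) \<Rightarrow> (nat \<Rightarrow> 'x) \<Rightarrow> 'a" where
  "emp_mean m f xs = (1 / real m) *\<^sub>R (\<Sum>s<m. f (xs s))"

definition episode_space :: "nat \<Rightarrow> 'x measure \<Rightarrow> 'x measure \<Rightarrow>
    (((nat \<Rightarrow> 'x) \<times> (nat \<Rightarrow> 'x)) \<times> 'x) measure" where
  "episode_space m Di Dj =
     (PiM {..<m} (\<lambda>_. Di) \<Otimes>\<^sub>M PiM {..<m} (\<lambda>_. Dj)) \<Otimes>\<^sub>M Di"

definition margin :: "nat \<Rightarrow> ('x \<Rightarrow> 'a::euclidean_space) \<Rightarrow>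
    ((nat \<Rightarrow> 'x) \<times> (nat \<Rightarrow> 'x)) \<times> 'x \<Rightarrow> real" where
  "margin m f \<omega> = (case \<omega> of ((xsi, xsj), x) \<Rightarrow>
     norm (f x - emp_mean m f xsj) ^ 2 - norm (f x - emp_mean m f xsi) ^ 2)"

end

theory Submission
  imports Defs
begin

text \<open>
  Write the margin as \<open>\<Delta> = e + W\<close> with \<open>e = d\<^sup>2 + (v\<^sub>j - v\<^sub>i) / m\<close>
  its mean and \<open>W\<close> a centred fluctuation, so that \<open>\<Delta> \<le> 0\<close> forces \<open>W\<^sup>2 \<ge> e\<^sup>2\<close>
  and Markov's inequality gives \<open>P(\<Delta> \<le> 0) \<le> E W\<^sup>2 / e\<^sup>2\<close>. With \<open>g\<close> the centred
  test feature, \<open>b, c\<close> the centred class means of the two support sets and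
  \<open>\<delta> = \<mu>\<^sub>j - \<mu>\<^sub>i\<close>, one has
  \<open>W = 2 g \<bullet> (b - c - \<delta>) + 2 \<delta> \<bullet> c + |c|\<^sup>2 - |b|\<^sup>2 - E(|c|\<^sup>2 - |b|\<^sup>2)\<close>.
  Independence of \<open>g\<close>, \<open>b\<close> and \<open>c\<close> kills the cross terms involving \<open>g\<close>, leaving
  \<open>4 E(g \<bullet> \<delta>)\<^sup>2 + 4 E|g|\<^sup>2 E|b - c|\<^sup>2\<close> plus the second moment of the support part,
  which is split with weights \<open>\<lambda>\<^sub>T, \<lambda>\<^sub>S, \<lambda>\<^sub>Q\<close>. The variance of \<open>|b|\<^sup>2\<close> is
  controlled by the fourth moment bound \<open>E|g\<^sub>1 + \<dots> + g\<^sub>m|\<^sup>4 \<le> m M\<^sub>4 + 3m(m - 1) v\<^sup>2\<close>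
  for i.i.d. centred vectors; dividing by \<open>d\<^sup>4\<close> yields the stated bound.
\<close>

lemma power2_inner_le: "(x \<bullet> y)\<^sup>2 \<le> (norm x)\<^sup>2 * (norm y)\<^sup>2"
  for x y :: "'a::real_inner"
  using Cauchy_Schwarz_ineq[of x y] by (simp add: power2_norm_eq_inner)

lemma square_sum3_le_weighted:
  fixes x y z l1 l2 l3 :: real
  assumes "l1 > 0" "l2 > 0" "l3 > 0"
  shows "(x + y + z)\<^sup>2 \<le> (l1 + l2 + l3) * (x\<^sup>2 / l1 + y\<^sup>2 / l2 + z\<^sup>2 / l3)"
proof -
  define p q r where "p = x / l1" and "q = y / l2" and "r = z / l3"
  have x: "x = l1 * p" and y: "y = l2 * q" and z: "z = l3 * r"
    using assms by (auto simp: p_def q_def r_def)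
  have "(l1 + l2 + l3) * (x\<^sup>2 / l1 + y\<^sup>2 / l2 + z\<^sup>2 / l3) - (x + y + z)\<^sup>2
     = l1 * l2 * (p - q)\<^sup>2 + l1 * l3 * (p - r)\<^sup>2 + l2 * l3 * (q - r)\<^sup>2"
    using assms unfolding x y z by (simp add: power2_eq_square field_simps)
  moreover have "0 \<le> l1 * l2 * (p - q)\<^sup>2 + l1 * l3 * (p - r)\<^sup>2 + l2 * l3 * (q - r)\<^sup>2"
    using assms by (intro add_nonneg_nonneg mult_nonneg_nonneg) auto
  ultimately show ?thesis by linarith
qed

lemma norm_add_power4:
  fixes x y :: "'a::real_inner"
  shows "norm (x + y) ^ 4 = norm x ^ 4 + norm y ^ 4 + 4 * (x \<bullet> y)\<^sup>2 + 2 * ((norm x)\<^sup>2 * (norm y)\<^sup>2)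
    + 4 * (((norm x)\<^sup>2 *\<^sub>R x) \<bullet> y) + 4 * (x \<bullet> ((norm y)\<^sup>2 *\<^sub>R y))"
proof -
  have "(norm (x + y))\<^sup>2 = (norm x)\<^sup>2 + (norm y)\<^sup>2 + 2 * (x \<bullet> y)"
    by (simp add: power2_norm_eq_inner inner_add inner_commute)
  moreover have "norm z ^ 4 = ((norm z)\<^sup>2)\<^sup>2" for z :: 'a
    by simp
  ultimately show ?thesis
    by (simp add: power2_eq_square algebra_simps)
qed

lemma (in finite_measure) integrable_norm_power_le:
  fixes F :: "'a \<Rightarrow> 'b::real_normed_vector"
  assumes [measurable]: "F \<in> borel_measurable M"
    and "integrable M (\<lambda>x. norm (F x) ^ k)" and "j \<le> k"
  shows "integrable M (\<lambda>x. norm (F x) ^ j)"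
proof (rule Bochner_Integration.integrable_bound)
  show "integrable M (\<lambda>x. 1 + norm (F x) ^ k)"
    using assms(2) by auto
  have "t ^ j \<le> 1 + t ^ k" if "t \<ge> 0" for t :: real
  proof (cases "t \<le> 1")
    case True
    then have "t ^ j \<le> 1" using that by (simp add: power_le_one)
    then show ?thesis using that by (simp add: add_increasing2)
  next
    case False
    then have "t ^ j \<le> t ^ k" using \<open>j \<le> k\<close> by (intro power_increasing) auto
    then show ?thesis by simp
  qed
  then show "AE x in M. norm (norm (F x) ^ j) \<le> norm (1 + norm (F x) ^ k)"
    by simp
qed simp

lemma (in finite_measure) integrable_of_norm_power:
  fixes F :: "'a \<Rightarrow> 'b::{banach, second_countable_topology}"
  assumes "F \<in> borel_measurable M" and "integrable M (\<lambda>x. norm (F x) ^ k)" and "1 \<le> k"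
  shows "integrable M F"
  using integrable_norm_power_le[OF assms] assms(1) by (simp add: integrable_norm_iff)

lemma (in finite_measure) integrable_norm_sq_deviation_sq:
  fixes b :: "'a \<Rightarrow> 'b::real_normed_vector"
  assumes [measurable]: "b \<in> borel_measurable M" and b4: "integrable M (\<lambda>x. norm (b x) ^ 4)"
  shows "integrable M (\<lambda>x. ((norm (b x))\<^sup>2 - v)\<^sup>2)"
proof -
  have "((norm (b x))\<^sup>2 - v)\<^sup>2 = norm (b x) ^ 4 - 2 * v * (norm (b x))\<^sup>2 + v\<^sup>2" for x
    by (simp add: power2_eq_square power4_eq_xxxx algebra_simps)
  then show ?thesis
    using b4 integrable_norm_power_le[OF _ b4, of 2] by simp
qed

lemma integrable_scaleR_of_square_integrable:
  fixes f :: "'a \<Rightarrow> real" and g :: "'a \<Rightarrow> 'b::{banach, second_countable_topology}"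
  assumes [measurable]: "f \<in> borel_measurable M" "g \<in> borel_measurable M"
    and "integrable M (\<lambda>x. (f x)\<^sup>2)" "integrable M (\<lambda>x. (norm (g x))\<^sup>2)"
  shows "integrable M (\<lambda>x. f x *\<^sub>R g x)"
proof (rule Bochner_Integration.integrable_bound)
  show "integrable M (\<lambda>x. (f x)\<^sup>2 + (norm (g x))\<^sup>2)"
    using assms by auto
  have "\<bar>u\<bar> * w \<le> u\<^sup>2 + w\<^sup>2" if "w \<ge> 0" for u w :: real
  proof -
    have "2 * (\<bar>u\<bar> * w) \<le> \<bar>u\<bar>\<^sup>2 + w\<^sup>2"
      using sum_squares_bound[of "\<bar>u\<bar>" w] by (simp add: mult.assoc)
    moreover have "0 \<le> \<bar>u\<bar> * w"
      using that by simp
    ultimately show ?thesis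
      unfolding power2_abs by linarith
  qed
  then show "AE x in M. norm (f x *\<^sub>R g x) \<le> norm ((f x)\<^sup>2 + (norm (g x))\<^sup>2)"
    by simp
qed simp

lemma integrable_mult_of_square_integrable:
  fixes f g :: "'a \<Rightarrow> real"
  assumes "f \<in> borel_measurable M" "g \<in> borel_measurable M"
    and "integrable M (\<lambda>x. (f x)\<^sup>2)" "integrable M (\<lambda>x. (g x)\<^sup>2)"
  shows "integrable M (\<lambda>x. f x * g x)"
  using integrable_scaleR_of_square_integrable[of f M g] assms by simp

lemma (in prob_space) prob_add_nonpos_le_second_moment:
  fixes W :: "'a \<Rightarrow> real"
  assumes [measurable]: "W \<in> borel_measurable M" and W2: "integrable M (\<lambda>x. (W x)\<^sup>2)" and "e > 0"
  shows "prob {x \<in> space M. e + W x \<le> 0} \<le> expectation (\<lambda>x. (W x)\<^sup>2) / e\<^sup>2"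
proof -
  have "prob {x \<in> space M. e + W x \<le> 0} \<le> prob {x \<in> space M. e\<^sup>2 \<le> (W x)\<^sup>2}"
  proof (rule finite_measure_mono)
    show "{x \<in> space M. e + W x \<le> 0} \<subseteq> {x \<in> space M. e\<^sup>2 \<le> (W x)\<^sup>2}"
      using \<open>e > 0\<close> by (auto simp: abs_le_square_iff[symmetric])
  qed measurable
  also have "\<dots> \<le> expectation (\<lambda>x. (W x)\<^sup>2) / e\<^sup>2"
    by (rule integral_Markov_inequality_measure[OF W2 sets.top]) (use \<open>e > 0\<close> in auto)
  finally show ?thesis .
qed

section \<open>Independent pairs\<close>

context pair_prob_space
begin

lemma distr_pair_snd: "distr (M1 \<Otimes>\<^sub>M M2) M2 snd = M2"
proof (intro measure_eqI)
  fix A assume A: "A \<in> sets (distr (M1 \<Otimes>\<^sub>M M2) M2 snd)"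
  then have "emeasure (distr (M1 \<Otimes>\<^sub>M M2) M2 snd) A = emeasure (M1 \<Otimes>\<^sub>M M2) (space M1 \<times> A)"
    by (auto simp: emeasure_distr space_pair_measure dest: sets.sets_into_space
        intro!: arg_cong2[where f=emeasure])
  with A show "emeasure (distr (M1 \<Otimes>\<^sub>M M2) M2 snd) A = emeasure M2 A"
    by (simp add: M2.emeasure_pair_measure_Times M1.emeasure_space_1)
qed simp

lemma integrable_comp_fst:
  fixes f :: "_ \<Rightarrow> _::{banach, second_countable_topology}"
  assumes "integrable M1 f"
  shows "integrable (M1 \<Otimes>\<^sub>M M2) (\<lambda>\<omega>. f (fst \<omega>))"
proof -
  have "integrable (distr (M1 \<Otimes>\<^sub>M M2) M1 fst) f"
    using assms by (simp add: M2.distr_pair_fst)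
  then show ?thesis
    using assms by (subst (asm) integrable_distr_eq) auto
qed

lemma integral_comp_fst:
  fixes f :: "_ \<Rightarrow> _::{banach, second_countable_topology}"
  assumes "f \<in> borel_measurable M1"
  shows "(\<integral>\<omega>. f (fst \<omega>) \<partial>(M1 \<Otimes>\<^sub>M M2)) = integral\<^sup>L M1 f"
  using integral_distr[OF measurable_fst assms, of M2] by (simp add: M2.distr_pair_fst)

lemma integrable_comp_snd:
  fixes f :: "_ \<Rightarrow> _::{banach, second_countable_topology}"
  assumes "integrable M2 f"
  shows "integrable (M1 \<Otimes>\<^sub>M M2) (\<lambda>\<omega>. f (snd \<omega>))"
proof -
  have "integrable (distr (M1 \<Otimes>\<^sub>M M2) M2 snd) f"
    using assms by (simp add: distr_pair_snd)
  then show ?thesis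
    using assms by (subst (asm) integrable_distr_eq) auto
qed

lemma integral_comp_snd:
  fixes f :: "_ \<Rightarrow> _::{banach, second_countable_topology}"
  assumes "f \<in> borel_measurable M2"
  shows "(\<integral>\<omega>. f (snd \<omega>) \<partial>(M1 \<Otimes>\<^sub>M M2)) = integral\<^sup>L M2 f"
  using integral_distr[OF measurable_snd assms, of M1] by (simp add: distr_pair_snd)

lemma
  fixes f g :: "_ \<Rightarrow> real"
  assumes f: "integrable M1 f" and g: "integrable M2 g"
  shows integrable_mult_fst_snd: "integrable (M1 \<Otimes>\<^sub>M M2) (\<lambda>\<omega>. f (fst \<omega>) * g (snd \<omega>))"
    and integral_mult_fst_snd: "(\<integral>\<omega>. f (fst \<omega>) * g (snd \<omega>) \<partial>(M1 \<Otimes>\<^sub>M M2)) = integral\<^sup>L M1 f * integral\<^sup>L M2 g"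
proof -
  have [measurable]: "f \<in> borel_measurable M1" "g \<in> borel_measurable M2"
    using f g by auto
  have "(\<integral>\<^sup>+ \<omega>. ennreal (norm (f (fst \<omega>) * g (snd \<omega>))) \<partial>(M1 \<Otimes>\<^sub>M M2))
      = (\<integral>\<^sup>+ x. \<integral>\<^sup>+ y. ennreal (norm (f x)) * ennreal (norm (g y)) \<partial>M2 \<partial>M1)"
    by (subst M2.nn_integral_fst[symmetric]) (auto simp: abs_mult ennreal_mult)
  also have "\<dots> = (\<integral>\<^sup>+ x. ennreal (norm (f x)) \<partial>M1) * (\<integral>\<^sup>+ y. ennreal (norm (g y)) \<partial>M2)"
    by (simp add: nn_integral_cmult nn_integral_multc)
  also have "\<dots> < \<infinity>"
    using f g by (simp add: integrable_iff_bounded ennreal_mult_less_top)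
  finally show I: "integrable (M1 \<Otimes>\<^sub>M M2) (\<lambda>\<omega>. f (fst \<omega>) * g (snd \<omega>))"
    by (simp add: integrable_iff_bounded)
  show "(\<integral>\<omega>. f (fst \<omega>) * g (snd \<omega>) \<partial>(M1 \<Otimes>\<^sub>M M2)) = integral\<^sup>L M1 f * integral\<^sup>L M2 g"
    using integral_fst'[OF I] by simp
qed

lemma
  fixes f g :: "_ \<Rightarrow> 'c::euclidean_space"
  assumes f: "integrable M1 f" and g: "integrable M2 g"
  shows integrable_inner_fst_snd: "integrable (M1 \<Otimes>\<^sub>M M2) (\<lambda>\<omega>. f (fst \<omega>) \<bullet> g (snd \<omega>))"
    and integral_inner_fst_snd: "(\<integral>\<omega>. f (fst \<omega>) \<bullet> g (snd \<omega>) \<partial>(M1 \<Otimes>\<^sub>M M2)) = integral\<^sup>L M1 f \<bullet> integral\<^sup>L M2 g"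
proof -
  have eq: "(\<lambda>\<omega>. f (fst \<omega>) \<bullet> g (snd \<omega>)) = (\<lambda>\<omega>. \<Sum>b\<in>Basis. (f (fst \<omega>) \<bullet> b) * (g (snd \<omega>) \<bullet> b))"
    by (rule ext, rule euclidean_inner)
  have coord: "integrable (M1 \<Otimes>\<^sub>M M2) (\<lambda>\<omega>. (f (fst \<omega>) \<bullet> b) * (g (snd \<omega>) \<bullet> b))" for b
    using f g by (intro integrable_mult_fst_snd) auto
  show "integrable (M1 \<Otimes>\<^sub>M M2) (\<lambda>\<omega>. f (fst \<omega>) \<bullet> g (snd \<omega>))"
    unfolding eq using coord by auto
  have "(\<integral>\<omega>. f (fst \<omega>) \<bullet> g (snd \<omega>) \<partial>(M1 \<Otimes>\<^sub>M M2))
      = (\<Sum>b\<in>Basis. \<integral>\<omega>. (f (fst \<omega>) \<bullet> b) * (g (snd \<omega>) \<bullet> b) \<partial>(M1 \<Otimes>\<^sub>M M2))"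
    unfolding eq using coord by (simp add: integral_sum)
  also have "\<dots> = (\<Sum>b\<in>Basis. (integral\<^sup>L M1 f \<bullet> b) * (integral\<^sup>L M2 g \<bullet> b))"
    by (rule sum.cong[OF refl], subst integral_mult_fst_snd) (use f g in auto)
  also have "\<dots> = integral\<^sup>L M1 f \<bullet> integral\<^sup>L M2 g"
    by (rule euclidean_inner[symmetric])
  finally show "(\<integral>\<omega>. f (fst \<omega>) \<bullet> g (snd \<omega>) \<partial>(M1 \<Otimes>\<^sub>M M2)) = integral\<^sup>L M1 f \<bullet> integral\<^sup>L M2 g" .
qed

lemma
  fixes X :: "_ \<Rightarrow> 'c::euclidean_space" and Y :: "_ \<Rightarrow> 'c"
  assumes [measurable]: "X \<in> borel_measurable M1" "Y \<in> borel_measurable M2"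
    and X2: "integrable M1 (\<lambda>x. (norm (X x))\<^sup>2)" and Y2: "integrable M2 (\<lambda>y. (norm (Y y))\<^sup>2)"
  shows integrable_inner_square_fst_snd: "integrable (M1 \<Otimes>\<^sub>M M2) (\<lambda>\<omega>. (X (fst \<omega>) \<bullet> Y (snd \<omega>))\<^sup>2)"
    and integral_inner_square_fst_snd_le: "(\<integral>\<omega>. (X (fst \<omega>) \<bullet> Y (snd \<omega>))\<^sup>2 \<partial>(M1 \<Otimes>\<^sub>M M2))
      \<le> (\<integral>x. (norm (X x))\<^sup>2 \<partial>M1) * (\<integral>y. (norm (Y y))\<^sup>2 \<partial>M2)"
proof -
  have XY2: "integrable (M1 \<Otimes>\<^sub>M M2) (\<lambda>\<omega>. (norm (X (fst \<omega>)))\<^sup>2 * (norm (Y (snd \<omega>)))\<^sup>2)"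
    by (rule integrable_mult_fst_snd[OF X2 Y2])
  have le: "(X (fst \<omega>) \<bullet> Y (snd \<omega>))\<^sup>2 \<le> (norm (X (fst \<omega>)))\<^sup>2 * (norm (Y (snd \<omega>)))\<^sup>2" for \<omega>
    by (rule power2_inner_le)
  show I: "integrable (M1 \<Otimes>\<^sub>M M2) (\<lambda>\<omega>. (X (fst \<omega>) \<bullet> Y (snd \<omega>))\<^sup>2)"
    by (rule Bochner_Integration.integrable_bound[OF XY2]) (use le in auto)
  show "(\<integral>\<omega>. (X (fst \<omega>) \<bullet> Y (snd \<omega>))\<^sup>2 \<partial>(M1 \<Otimes>\<^sub>M M2))
      \<le> (\<integral>x. (norm (X x))\<^sup>2 \<partial>M1) * (\<integral>y. (norm (Y y))\<^sup>2 \<partial>M2)"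
    using integral_mono[OF I XY2 le] by (simp add: integral_mult_fst_snd[OF X2 Y2])
qed

lemma
  fixes X :: "_ \<Rightarrow> 'c::euclidean_space" and Y :: "_ \<Rightarrow> 'c"
  assumes [measurable]: "X \<in> borel_measurable M1" "Y \<in> borel_measurable M2"
    and X2: "integrable M1 (\<lambda>x. (norm (X x))\<^sup>2)" and Y2: "integrable M2 (\<lambda>y. (norm (Y y))\<^sup>2)"
    and X0: "integral\<^sup>L M1 X = 0"
  shows integrable_norm_add_sq_fst_snd:
      "integrable (M1 \<Otimes>\<^sub>M M2) (\<lambda>\<omega>. (norm (X (fst \<omega>) + Y (snd \<omega>)))\<^sup>2)"
    and integral_norm_add_sq_fst_snd:
      "(\<integral>\<omega>. (norm (X (fst \<omega>) + Y (snd \<omega>)))\<^sup>2 \<partial>(M1 \<Otimes>\<^sub>M M2))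
        = (\<integral>x. (norm (X x))\<^sup>2 \<partial>M1) + (\<integral>y. (norm (Y y))\<^sup>2 \<partial>M2)"
proof -
  have X1: "integrable M1 X" and Y1: "integrable M2 Y"
    using M1.integrable_of_norm_power[OF _ X2] M2.integrable_of_norm_power[OF _ Y2] by auto
  have expand: "(\<lambda>\<omega>. (norm (X (fst \<omega>) + Y (snd \<omega>)))\<^sup>2)
      = (\<lambda>\<omega>. (norm (X (fst \<omega>)))\<^sup>2 + (norm (Y (snd \<omega>)))\<^sup>2 + 2 * (X (fst \<omega>) \<bullet> Y (snd \<omega>)))"
    by (simp add: power2_norm_eq_inner inner_add inner_commute algebra_simps)
  note ints = integrable_comp_fst[OF X2] integrable_comp_snd[OF Y2] integrable_inner_fst_snd[OF X1 Y1]
  show "integrable (M1 \<Otimes>\<^sub>M M2) (\<lambda>\<omega>. (norm (X (fst \<omega>) + Y (snd \<omega>)))\<^sup>2)"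
    unfolding expand using ints by auto
  show "(\<integral>\<omega>. (norm (X (fst \<omega>) + Y (snd \<omega>)))\<^sup>2 \<partial>(M1 \<Otimes>\<^sub>M M2))
        = (\<integral>x. (norm (X x))\<^sup>2 \<partial>M1) + (\<integral>y. (norm (Y y))\<^sup>2 \<partial>M2)"
    unfolding expand using ints
    by (simp add: integral_comp_fst[of "\<lambda>x. (norm (X x))\<^sup>2"] integral_comp_snd[of "\<lambda>y. (norm (Y y))\<^sup>2"]
        integral_inner_fst_snd[OF X1 Y1] X0)
qed

lemma
  fixes X :: "_ \<Rightarrow> 'c::euclidean_space" and Y :: "_ \<Rightarrow> 'c"
  assumes [measurable]: "X \<in> borel_measurable M1" "Y \<in> borel_measurable M2"
    and X2: "integrable M1 (\<lambda>x. (norm (X x))\<^sup>2)" and Y2: "integrable M2 (\<lambda>y. (norm (Y y))\<^sup>2)"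
    and X0: "integral\<^sup>L M1 X = 0" and Y0: "integral\<^sup>L M2 Y = 0"
  shows integral_diff_fst_snd: "(\<integral>\<omega>. X (fst \<omega>) - Y (snd \<omega>) \<partial>(M1 \<Otimes>\<^sub>M M2)) = 0"
    and integrable_norm_diff_sq_fst_snd:
      "integrable (M1 \<Otimes>\<^sub>M M2) (\<lambda>\<omega>. (norm (X (fst \<omega>) - Y (snd \<omega>)))\<^sup>2)"
    and integral_norm_diff_sq_fst_snd:
      "(\<integral>\<omega>. (norm (X (fst \<omega>) - Y (snd \<omega>)))\<^sup>2 \<partial>(M1 \<Otimes>\<^sub>M M2))
        = (\<integral>x. (norm (X x))\<^sup>2 \<partial>M1) + (\<integral>y. (norm (Y y))\<^sup>2 \<partial>M2)"
proof -
  have X1: "integrable M1 X" and Y1: "integrable M2 Y"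
    using M1.integrable_of_norm_power[OF _ X2] M2.integrable_of_norm_power[OF _ Y2] by auto
  show "(\<integral>\<omega>. X (fst \<omega>) - Y (snd \<omega>) \<partial>(M1 \<Otimes>\<^sub>M M2)) = 0"
    using integral_comp_fst[of X] integral_comp_snd[of Y] X0 Y0
    by (simp add: Bochner_Integration.integral_diff[OF integrable_comp_fst[OF X1] integrable_comp_snd[OF Y1]])
  have mY: "(\<lambda>y. - Y y) \<in> borel_measurable M2" and mY2: "integrable M2 (\<lambda>y. (norm (- Y y))\<^sup>2)"
    using Y2 by simp_all
  show "integrable (M1 \<Otimes>\<^sub>M M2) (\<lambda>\<omega>. (norm (X (fst \<omega>) - Y (snd \<omega>)))\<^sup>2)"
    using integrable_norm_add_sq_fst_snd[OF _ mY X2 mY2 X0] by simp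
  show "(\<integral>\<omega>. (norm (X (fst \<omega>) - Y (snd \<omega>)))\<^sup>2 \<partial>(M1 \<Otimes>\<^sub>M M2))
      = (\<integral>x. (norm (X x))\<^sup>2 \<partial>M1) + (\<integral>y. (norm (Y y))\<^sup>2 \<partial>M2)"
    using integral_norm_add_sq_fst_snd[OF _ mY X2 mY2 X0] by simp
qed

lemma
  fixes X :: "_ \<Rightarrow> 'c::euclidean_space" and Y :: "_ \<Rightarrow> 'c"
  assumes [measurable]: "X \<in> borel_measurable M1" "Y \<in> borel_measurable M2"
    and X4: "integrable M1 (\<lambda>x. norm (X x) ^ 4)" and Y4: "integrable M2 (\<lambda>y. norm (Y y) ^ 4)"
    and X0: "integral\<^sup>L M1 X = 0" and Y0: "integral\<^sup>L M2 Y = 0"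
  shows integrable_norm_add_pow4_fst_snd:
      "integrable (M1 \<Otimes>\<^sub>M M2) (\<lambda>\<omega>. norm (X (fst \<omega>) + Y (snd \<omega>)) ^ 4)"
    and integral_norm_add_pow4_fst_snd_le:
      "(\<integral>\<omega>. norm (X (fst \<omega>) + Y (snd \<omega>)) ^ 4 \<partial>(M1 \<Otimes>\<^sub>M M2))
        \<le> (\<integral>x. norm (X x) ^ 4 \<partial>M1) + (\<integral>y. norm (Y y) ^ 4 \<partial>M2)
          + 6 * ((\<integral>x. (norm (X x))\<^sup>2 \<partial>M1) * (\<integral>y. (norm (Y y))\<^sup>2 \<partial>M2))"
proof -
  have X2: "integrable M1 (\<lambda>x. (norm (X x))\<^sup>2)" and Y2: "integrable M2 (\<lambda>y. (norm (Y y))\<^sup>2)"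
    using M1.integrable_norm_power_le[OF _ X4] M2.integrable_norm_power_le[OF _ Y4] by auto
  have X1: "integrable M1 X" and Y1: "integrable M2 Y"
    using M1.integrable_of_norm_power[OF _ X4] M2.integrable_of_norm_power[OF _ Y4] by auto
  have X3: "integrable M1 (\<lambda>x. (norm (X x))\<^sup>2 *\<^sub>R X x)"
    using M1.integrable_norm_power_le[OF _ X4, of 3]
    by (subst integrable_norm_iff[symmetric]) (auto simp: power3_eq_cube power2_eq_square)
  have Y3: "integrable M2 (\<lambda>y. (norm (Y y))\<^sup>2 *\<^sub>R Y y)"
    using M2.integrable_norm_power_le[OF _ Y4, of 3]
    by (subst integrable_norm_iff[symmetric]) (auto simp: power3_eq_cube power2_eq_square)
  note ints = integrable_comp_fst[OF X4] integrable_comp_snd[OF Y4]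
    integrable_inner_square_fst_snd[OF assms(1,2) X2 Y2] integrable_mult_fst_snd[OF X2 Y2]
    integrable_inner_fst_snd[OF X3 Y1] integrable_inner_fst_snd[OF X1 Y3]
  have cross: "(\<integral>\<omega>. ((norm (X (fst \<omega>)))\<^sup>2 *\<^sub>R X (fst \<omega>)) \<bullet> Y (snd \<omega>) \<partial>(M1 \<Otimes>\<^sub>M M2)) = 0"
    "(\<integral>\<omega>. X (fst \<omega>) \<bullet> ((norm (Y (snd \<omega>)))\<^sup>2 *\<^sub>R Y (snd \<omega>)) \<partial>(M1 \<Otimes>\<^sub>M M2)) = 0"
    by (simp_all only: integral_inner_fst_snd[OF X3 Y1] integral_inner_fst_snd[OF X1 Y3] X0 Y0
        inner_zero_left inner_zero_right)
  show "integrable (M1 \<Otimes>\<^sub>M M2) (\<lambda>\<omega>. norm (X (fst \<omega>) + Y (snd \<omega>)) ^ 4)"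
    unfolding norm_add_power4 using ints by auto
  have "(\<integral>\<omega>. norm (X (fst \<omega>) + Y (snd \<omega>)) ^ 4 \<partial>(M1 \<Otimes>\<^sub>M M2))
      = (\<integral>x. norm (X x) ^ 4 \<partial>M1) + (\<integral>y. norm (Y y) ^ 4 \<partial>M2)
        + 4 * (\<integral>\<omega>. (X (fst \<omega>) \<bullet> Y (snd \<omega>))\<^sup>2 \<partial>(M1 \<Otimes>\<^sub>M M2))
        + 2 * ((\<integral>x. (norm (X x))\<^sup>2 \<partial>M1) * (\<integral>y. (norm (Y y))\<^sup>2 \<partial>M2))"
    unfolding norm_add_power4 using ints cross
    by (simp add: integral_comp_fst[of "\<lambda>x. norm (X x) ^ 4"]
        integral_comp_snd[of "\<lambda>y. norm (Y y) ^ 4"] integral_mult_fst_snd[OF X2 Y2])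
  with integral_inner_square_fst_snd_le[OF assms(1,2) X2 Y2] show "(\<integral>\<omega>. norm (X (fst \<omega>) + Y (snd \<omega>)) ^ 4 \<partial>(M1 \<Otimes>\<^sub>M M2))
        \<le> (\<integral>x. norm (X x) ^ 4 \<partial>M1) + (\<integral>y. norm (Y y) ^ 4 \<partial>M2)
          + 6 * ((\<integral>x. (norm (X x))\<^sup>2 \<partial>M1) * (\<integral>y. (norm (Y y))\<^sup>2 \<partial>M2))"
    by linarith
qed

lemma
  fixes H :: "_ \<Rightarrow> 'c::euclidean_space" and K :: "_ \<Rightarrow> real" and a :: "_ \<Rightarrow> 'c" and \<delta> :: 'c
  assumes Hm[measurable]: "H \<in> borel_measurable M1" and [measurable]: "K \<in> borel_measurable M1"
    and am[measurable]: "a \<in> borel_measurable M2"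
    and H2: "integrable M1 (\<lambda>x. (norm (H x))\<^sup>2)" and H0: "integral\<^sup>L M1 H = 0"
    and K2: "integrable M1 (\<lambda>x. (K x)\<^sup>2)"
    and a2: "integrable M2 (\<lambda>y. (norm (a y))\<^sup>2)" and a0: "integral\<^sup>L M2 a = 0"
  defines "W \<equiv> \<lambda>\<omega>. 2 * (a (snd \<omega>) \<bullet> (H (fst \<omega>) - \<delta>)) + K (fst \<omega>)"
  shows integrable_square_margin_noise: "integrable (M1 \<Otimes>\<^sub>M M2) (\<lambda>\<omega>. (W \<omega>)\<^sup>2)"
    and integral_square_margin_noise_le: "(\<integral>\<omega>. (W \<omega>)\<^sup>2 \<partial>(M1 \<Otimes>\<^sub>M M2))
      \<le> 4 * (\<integral>y. (a y \<bullet> \<delta>)\<^sup>2 \<partial>M2) + 4 * (\<integral>y. (norm (a y))\<^sup>2 \<partial>M2) * (\<integral>x. (norm (H x))\<^sup>2 \<partial>M1)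
        + (\<integral>x. (K x)\<^sup>2 \<partial>M1)"
proof -
  define X where "X \<omega> = H (fst \<omega>) \<bullet> a (snd \<omega>)" for \<omega>
  define Y where "Y \<omega> = a (snd \<omega>) \<bullet> \<delta>" for \<omega> :: "'a \<times> 'b"
  define Z where "Z \<omega> = K (fst \<omega>)" for \<omega> :: "'a \<times> 'b"
  have Xm[measurable]: "X \<in> borel_measurable (M1 \<Otimes>\<^sub>M M2)"
    and Ym[measurable]: "Y \<in> borel_measurable (M1 \<Otimes>\<^sub>M M2)"
    and Zm[measurable]: "Z \<in> borel_measurable (M1 \<Otimes>\<^sub>M M2)"
    unfolding X_def Y_def Z_def by measurable
  have H1: "integrable M1 H" and a1: "integrable M2 a" and K1: "integrable M1 K"
    using M1.integrable_of_norm_power[OF _ H2] M2.integrable_of_norm_power[OF _ a2]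
      M1.integrable_of_norm_power[of K 2] K2 by auto
  have ad2: "integrable M2 (\<lambda>y. (a y \<bullet> \<delta>)\<^sup>2)"
    by (rule Bochner_Integration.integrable_bound[of _ "\<lambda>y. (norm (a y))\<^sup>2 * (norm \<delta>)\<^sup>2"])
      (use a2 power2_inner_le[of "a _" \<delta>] in auto)
  have X2: "integrable (M1 \<Otimes>\<^sub>M M2) (\<lambda>\<omega>. (X \<omega>)\<^sup>2)"
    and Y2: "integrable (M1 \<Otimes>\<^sub>M M2) (\<lambda>\<omega>. (Y \<omega>)\<^sup>2)"
    and Z2: "integrable (M1 \<Otimes>\<^sub>M M2) (\<lambda>\<omega>. (Z \<omega>)\<^sup>2)"
    unfolding X_def Y_def Z_def
    by (rule integrable_inner_square_fst_snd[OF Hm am H2 a2] integrable_comp_snd[OF ad2]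
        integrable_comp_fst[OF K2])+
  have XY: "integrable (M1 \<Otimes>\<^sub>M M2) (\<lambda>\<omega>. X \<omega> * Y \<omega>)"
    and XZ: "integrable (M1 \<Otimes>\<^sub>M M2) (\<lambda>\<omega>. X \<omega> * Z \<omega>)"
    and YZ: "integrable (M1 \<Otimes>\<^sub>M M2) (\<lambda>\<omega>. Y \<omega> * Z \<omega>)"
    by (intro integrable_mult_of_square_integrable Xm Ym Zm X2 Y2 Z2)+
  have ada: "integrable M2 (\<lambda>y. (a y \<bullet> \<delta>) *\<^sub>R a y)" and KH: "integrable M1 (\<lambda>x. K x *\<^sub>R H x)"
    by (rule integrable_scaleR_of_square_integrable[OF _ _ ad2 a2]
        integrable_scaleR_of_square_integrable[OF _ _ K2 H2]; simp)+
  have XY0: "(\<integral>\<omega>. X \<omega> * Y \<omega> \<partial>(M1 \<Otimes>\<^sub>M M2)) = 0"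
    and XZ0: "(\<integral>\<omega>. X \<omega> * Z \<omega> \<partial>(M1 \<Otimes>\<^sub>M M2)) = 0"
    and YZ0: "(\<integral>\<omega>. Y \<omega> * Z \<omega> \<partial>(M1 \<Otimes>\<^sub>M M2)) = 0"
    using integral_inner_fst_snd[OF H1 ada] integral_inner_fst_snd[OF KH a1]
      integral_mult_fst_snd[OF K1, of "\<lambda>y. a y \<bullet> \<delta>"] H0 a1 a0
    by (simp_all add: X_def Y_def Z_def mult_ac)
  have expand: "(\<lambda>\<omega>. (W \<omega>)\<^sup>2) = (\<lambda>\<omega>. 4 * (X \<omega>)\<^sup>2 + 4 * (Y \<omega>)\<^sup>2 + (Z \<omega>)\<^sup>2
      - 8 * (X \<omega> * Y \<omega>) + 4 * (X \<omega> * Z \<omega>) - 4 * (Y \<omega> * Z \<omega>))"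
  proof
    fix \<omega>
    have "W \<omega> = 2 * (X \<omega> - Y \<omega>) + Z \<omega>"
      by (simp add: W_def X_def Y_def Z_def inner_diff_right inner_commute)
    moreover have "(2 * (x - y) + z)\<^sup>2 = 4 * x\<^sup>2 + 4 * y\<^sup>2 + z\<^sup>2 - 8 * (x * y) + 4 * (x * z) - 4 * (y * z)"
      for x y z :: real
      by (simp add: power2_eq_square algebra_simps)
    ultimately show "(W \<omega>)\<^sup>2 = 4 * (X \<omega>)\<^sup>2 + 4 * (Y \<omega>)\<^sup>2 + (Z \<omega>)\<^sup>2
      - 8 * (X \<omega> * Y \<omega>) + 4 * (X \<omega> * Z \<omega>) - 4 * (Y \<omega> * Z \<omega>)"
      by simp
  qed
  show "integrable (M1 \<Otimes>\<^sub>M M2) (\<lambda>\<omega>. (W \<omega>)\<^sup>2)"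
    unfolding expand
    by (intro Bochner_Integration.integrable_add Bochner_Integration.integrable_diff
        integrable_mult_right X2 Y2 Z2 XY XZ YZ)
  have "(\<integral>\<omega>. (W \<omega>)\<^sup>2 \<partial>(M1 \<Otimes>\<^sub>M M2)) = 4 * (\<integral>\<omega>. (X \<omega>)\<^sup>2 \<partial>(M1 \<Otimes>\<^sub>M M2))
      + 4 * (\<integral>\<omega>. (Y \<omega>)\<^sup>2 \<partial>(M1 \<Otimes>\<^sub>M M2)) + (\<integral>\<omega>. (Z \<omega>)\<^sup>2 \<partial>(M1 \<Otimes>\<^sub>M M2))"
    unfolding expand using XY0 XZ0 YZ0
    by (simp add: Bochner_Integration.integral_add Bochner_Integration.integral_diff
        Bochner_Integration.integrable_add Bochner_Integration.integrable_diff X2 Y2 Z2 XY XZ YZ)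
  moreover have "(\<integral>\<omega>. (Y \<omega>)\<^sup>2 \<partial>(M1 \<Otimes>\<^sub>M M2)) = (\<integral>y. (a y \<bullet> \<delta>)\<^sup>2 \<partial>M2)"
    and "(\<integral>\<omega>. (Z \<omega>)\<^sup>2 \<partial>(M1 \<Otimes>\<^sub>M M2)) = (\<integral>x. (K x)\<^sup>2 \<partial>M1)"
    unfolding Y_def Z_def by (rule integral_comp_snd integral_comp_fst; measurable)+
  ultimately show "(\<integral>\<omega>. (W \<omega>)\<^sup>2 \<partial>(M1 \<Otimes>\<^sub>M M2))
      \<le> 4 * (\<integral>y. (a y \<bullet> \<delta>)\<^sup>2 \<partial>M2) + 4 * (\<integral>y. (norm (a y))\<^sup>2 \<partial>M2) * (\<integral>x. (norm (H x))\<^sup>2 \<partial>M1)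
        + (\<integral>x. (K x)\<^sup>2 \<partial>M1)"
    using integral_inner_square_fst_snd_le[OF Hm am H2 a2] unfolding X_def by (simp add: mult.commute)
qed

lemma
  fixes b :: "_ \<Rightarrow> 'c::euclidean_space" and c :: "_ \<Rightarrow> 'c" and \<delta> :: 'c and lT lS lQ :: real
  assumes [measurable]: "b \<in> borel_measurable M1" "c \<in> borel_measurable M2"
    and b4: "integrable M1 (\<lambda>x. norm (b x) ^ 4)" and c4: "integrable M2 (\<lambda>y. norm (c y) ^ 4)"
    and l: "lT > 0" "lS > 0" "lQ > 0"
  defines "vb \<equiv> \<integral>x. (norm (b x))\<^sup>2 \<partial>M1" and "vc \<equiv> \<integral>y. (norm (c y))\<^sup>2 \<partial>M2"
  defines "K \<equiv> \<lambda>\<omega>. 2 * (\<delta> \<bullet> c (snd \<omega>)) + (norm (c (snd \<omega>)))\<^sup>2 - (norm (b (fst \<omega>)))\<^sup>2 - (vc - vb)"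
  shows integrable_square_support_noise: "integrable (M1 \<Otimes>\<^sub>M M2) (\<lambda>\<omega>. (K \<omega>)\<^sup>2)"
    and integral_square_support_noise_le: "(\<integral>\<omega>. (K \<omega>)\<^sup>2 \<partial>(M1 \<Otimes>\<^sub>M M2))
      \<le> (lT + lS + lQ) * ((norm \<delta>)\<^sup>2 * vc / lT + (norm \<delta>)\<^sup>2 * vc / lS
        + ((\<integral>x. ((norm (b x))\<^sup>2 - vb)\<^sup>2 \<partial>M1) + (\<integral>y. ((norm (c y))\<^sup>2 - vc)\<^sup>2 \<partial>M2)) / lQ)"
proof -
  define X where "X x = vb - (norm (b x))\<^sup>2" for x
  define Y where "Y y = (norm (c y))\<^sup>2 - vc" for y
  define S where "S \<omega> = \<delta> \<bullet> c (snd \<omega>)" for \<omega> :: "'a \<times> 'b"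
  define Q where "Q \<omega> = X (fst \<omega>) + Y (snd \<omega>)" for \<omega>
  have [measurable]: "X \<in> borel_measurable M1" "Y \<in> borel_measurable M2"
    "S \<in> borel_measurable (M1 \<Otimes>\<^sub>M M2)" "Q \<in> borel_measurable (M1 \<Otimes>\<^sub>M M2)"
    unfolding X_def Y_def S_def Q_def by measurable
  have K_eq: "K \<omega> = S \<omega> + S \<omega> + Q \<omega>" for \<omega>
    by (simp add: K_def S_def Q_def X_def Y_def)
  have b2: "integrable M1 (\<lambda>x. (norm (b x))\<^sup>2)" and c2: "integrable M2 (\<lambda>y. (norm (c y))\<^sup>2)"
    using M1.integrable_norm_power_le[OF _ b4, of 2] M2.integrable_norm_power_le[OF _ c4, of 2] by auto
  have X2: "integrable M1 (\<lambda>x. (X x)\<^sup>2)" and Y2: "integrable M2 (\<lambda>y. (Y y)\<^sup>2)"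
    using M1.integrable_norm_sq_deviation_sq[OF _ b4, of vb] M2.integrable_norm_sq_deviation_sq[OF _ c4, of vc]
    by (simp_all add: X_def Y_def power2_commute[of vb])
  have X0: "integral\<^sup>L M1 X = 0"
    using b2 by (simp add: X_def[abs_def] vb_def M1.prob_space)
  have Q2: "integrable (M1 \<Otimes>\<^sub>M M2) (\<lambda>\<omega>. (Q \<omega>)\<^sup>2)"
    and EQ2: "(\<integral>\<omega>. (Q \<omega>)\<^sup>2 \<partial>(M1 \<Otimes>\<^sub>M M2)) = (\<integral>x. (X x)\<^sup>2 \<partial>M1) + (\<integral>y. (Y y)\<^sup>2 \<partial>M2)"
    using integrable_norm_add_sq_fst_snd[of X Y] integral_norm_add_sq_fst_snd[of X Y] X2 Y2 X0
    by (simp_all add: Q_def)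
  have dc2: "integrable M2 (\<lambda>y. (\<delta> \<bullet> c y)\<^sup>2)"
    by (rule Bochner_Integration.integrable_bound[of _ "\<lambda>y. (norm \<delta>)\<^sup>2 * (norm (c y))\<^sup>2"])
      (use c2 power2_inner_le[of \<delta>] in auto)
  have S2: "integrable (M1 \<Otimes>\<^sub>M M2) (\<lambda>\<omega>. (S \<omega>)\<^sup>2)"
    unfolding S_def by (rule integrable_comp_snd[OF dc2])
  have ES2: "(\<integral>\<omega>. (S \<omega>)\<^sup>2 \<partial>(M1 \<Otimes>\<^sub>M M2)) \<le> (norm \<delta>)\<^sup>2 * vc"
  proof -
    have "(\<integral>\<omega>. (S \<omega>)\<^sup>2 \<partial>(M1 \<Otimes>\<^sub>M M2)) = (\<integral>y. (\<delta> \<bullet> c y)\<^sup>2 \<partial>M2)"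
      unfolding S_def by (rule integral_comp_snd) measurable
    also have "\<dots> \<le> (\<integral>y. (norm \<delta>)\<^sup>2 * (norm (c y))\<^sup>2 \<partial>M2)"
      by (rule integral_mono[OF dc2]) (use c2 power2_inner_le in auto)
    finally show ?thesis
      by (simp add: vc_def)
  qed
  define R where "R \<omega> = (lT + lS + lQ) * ((S \<omega>)\<^sup>2 / lT + (S \<omega>)\<^sup>2 / lS + (Q \<omega>)\<^sup>2 / lQ)" for \<omega>
  have R: "integrable (M1 \<Otimes>\<^sub>M M2) R"
    unfolding R_def using S2 Q2 by auto
  \<comment> \<open>\<open>K\<^sup>2\<close> is not expanded: the cross term \<open>E((\<delta> \<bullet> c) (|c|\<^sup>2 - vc))\<close> is a third moment
    and need not vanish.\<close>
  have K_le: "(K \<omega>)\<^sup>2 \<le> R \<omega>" for \<omega>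
    unfolding K_eq R_def by (rule square_sum3_le_weighted[OF l])
  show K2: "integrable (M1 \<Otimes>\<^sub>M M2) (\<lambda>\<omega>. (K \<omega>)\<^sup>2)"
  proof (rule Bochner_Integration.integrable_bound[OF R])
    show "AE \<omega> in M1 \<Otimes>\<^sub>M M2. norm ((K \<omega>)\<^sup>2) \<le> norm (R \<omega>)"
      using K_le by (auto intro!: AE_I2 order_trans[OF _ abs_ge_self])
  qed (simp add: K_def)
  have "(\<integral>\<omega>. (K \<omega>)\<^sup>2 \<partial>(M1 \<Otimes>\<^sub>M M2)) \<le> integral\<^sup>L (M1 \<Otimes>\<^sub>M M2) R"
    by (rule integral_mono[OF K2 R K_le])
  also have "\<dots> = (lT + lS + lQ) * ((\<integral>\<omega>. (S \<omega>)\<^sup>2 \<partial>(M1 \<Otimes>\<^sub>M M2)) / lT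
      + (\<integral>\<omega>. (S \<omega>)\<^sup>2 \<partial>(M1 \<Otimes>\<^sub>M M2)) / lS + (\<integral>\<omega>. (Q \<omega>)\<^sup>2 \<partial>(M1 \<Otimes>\<^sub>M M2)) / lQ)"
    unfolding R_def using S2 Q2 by simp
  also have "\<dots> \<le> (lT + lS + lQ) * ((norm \<delta>)\<^sup>2 * vc / lT + (norm \<delta>)\<^sup>2 * vc / lS
      + ((\<integral>x. (X x)\<^sup>2 \<partial>M1) + (\<integral>y. (Y y)\<^sup>2 \<partial>M2)) / lQ)"
    unfolding EQ2 using ES2 l by (intro mult_left_mono add_mono divide_right_mono) auto
  finally show "(\<integral>\<omega>. (K \<omega>)\<^sup>2 \<partial>(M1 \<Otimes>\<^sub>M M2))
      \<le> (lT + lS + lQ) * ((norm \<delta>)\<^sup>2 * vc / lT + (norm \<delta>)\<^sup>2 * vc / lS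
        + ((\<integral>x. ((norm (b x))\<^sup>2 - vb)\<^sup>2 \<partial>M1) + (\<integral>y. ((norm (c y))\<^sup>2 - vc)\<^sup>2 \<partial>M2)) / lQ)"
    by (simp add: X_def Y_def power2_commute[of vb])
qed

end

section \<open>Sums of independent identically distributed vectors\<close>

lemma (in sigma_finite_measure)
  fixes F :: "(nat \<Rightarrow> 'a) \<Rightarrow> 'c::{banach, second_countable_topology}"
  assumes F: "F \<in> borel_measurable (PiM {..<Suc n} (\<lambda>_. M))"
    and int: "integrable (PiM {..<n} (\<lambda>_. M) \<Otimes>\<^sub>M M) (\<lambda>\<omega>. F ((fst \<omega>)(n := snd \<omega>)))"
  shows integrable_PiM_lessThan_Suc: "integrable (PiM {..<Suc n} (\<lambda>_. M)) F"
    and integral_PiM_lessThan_Suc: "integral\<^sup>L (PiM {..<Suc n} (\<lambda>_. M)) F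
      = (\<integral>\<omega>. F ((fst \<omega>)(n := snd \<omega>)) \<partial>(PiM {..<n} (\<lambda>_. M) \<Otimes>\<^sub>M M))"
proof -
  interpret P: product_sigma_finite "\<lambda>_. M"
    by (simp add: product_sigma_finite_def sigma_finite_measure_axioms)
  interpret Q: pair_sigma_finite "PiM {..<n} (\<lambda>_. M)" M
    by (simp add: pair_sigma_finite_def sigma_finite_measure_axioms P.sigma_finite)
  have ins: "{..<Suc n} = insert n {..<n}"
    by auto
  have "(\<integral>\<^sup>+ x. ennreal (norm (F x)) \<partial>PiM (insert n {..<n}) (\<lambda>_. M))
     = (\<integral>\<^sup>+ x. \<integral>\<^sup>+ y. ennreal (norm (F (x(n := y)))) \<partial>M \<partial>PiM {..<n} (\<lambda>_. M))"
    by (rule P.product_nn_integral_insert) (use F in \<open>auto simp: ins\<close>)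
  also have "\<dots> = (\<integral>\<^sup>+ \<omega>. ennreal (norm (F ((fst \<omega>)(n := snd \<omega>)))) \<partial>(PiM {..<n} (\<lambda>_. M) \<Otimes>\<^sub>M M))"
    by (subst nn_integral_fst[symmetric]) (use int in auto)
  also have "\<dots> < \<infinity>"
    using int by (simp add: integrable_iff_bounded)
  finally show I: "integrable (PiM {..<Suc n} (\<lambda>_. M)) F"
    using F by (simp add: integrable_iff_bounded ins)
  have "integral\<^sup>L (PiM (insert n {..<n}) (\<lambda>_. M)) F
      = (\<integral>x. \<integral>y. F (x(n := y)) \<partial>M \<partial>PiM {..<n} (\<lambda>_. M))"
    by (rule P.product_integral_insert) (use I in \<open>auto simp: ins\<close>)
  also have "\<dots> = (\<integral>\<omega>. F ((fst \<omega>)(n := snd \<omega>)) \<partial>(PiM {..<n} (\<lambda>_. M) \<Otimes>\<^sub>M M))"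
    using Q.integral_fst'[OF int] by simp
  finally show "integral\<^sup>L (PiM {..<Suc n} (\<lambda>_. M)) F
      = (\<integral>\<omega>. F ((fst \<omega>)(n := snd \<omega>)) \<partial>(PiM {..<n} (\<lambda>_. M) \<Otimes>\<^sub>M M))"
    by (simp add: ins)
qed

lemma (in prob_space) moments_sum_iid:
  fixes g :: "'a \<Rightarrow> 'c::euclidean_space"
  assumes [measurable]: "g \<in> borel_measurable M"
    and g4: "integrable M (\<lambda>x. norm (g x) ^ 4)" and g0: "expectation g = 0"
  shows "integrable (PiM {..<n} (\<lambda>_. M)) (\<lambda>xs. norm (\<Sum>s<n. g (xs s)) ^ 4)
    \<and> (\<integral>xs. (\<Sum>s<n. g (xs s)) \<partial>PiM {..<n} (\<lambda>_. M)) = 0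
    \<and> (\<integral>xs. (norm (\<Sum>s<n. g (xs s)))\<^sup>2 \<partial>PiM {..<n} (\<lambda>_. M))
        = real n * expectation (\<lambda>x. (norm (g x))\<^sup>2)
    \<and> (\<integral>xs. norm (\<Sum>s<n. g (xs s)) ^ 4 \<partial>PiM {..<n} (\<lambda>_. M))
        \<le> real n * expectation (\<lambda>x. norm (g x) ^ 4)
          + 3 * real n * (real n - 1) * (expectation (\<lambda>x. (norm (g x))\<^sup>2))\<^sup>2"
proof (induction n)
  case 0
  interpret P0: prob_space "PiM {..<0::nat} (\<lambda>_. M)"
    by (rule prob_space_PiM) (rule prob_space_axioms)
  show ?case
    by simp
next
  case (Suc n)
  let ?Pn = "PiM {..<n} (\<lambda>_. M)" and ?Sn = "\<lambda>xs. \<Sum>s<n. g (xs s)"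
  let ?S = "\<lambda>xs. \<Sum>s<Suc n. g (xs s)"
  define v where "v = expectation (\<lambda>x. (norm (g x))\<^sup>2)"
  define M4 where "M4 = expectation (\<lambda>x. norm (g x) ^ 4)"
  interpret Pn: prob_space ?Pn
    by (rule prob_space_PiM) (rule prob_space_axioms)
  interpret PM: pair_prob_space ?Pn M
    by unfold_locales
  have [measurable]: "?Sn \<in> borel_measurable ?Pn" "?S \<in> borel_measurable (PiM {..<Suc n} (\<lambda>_. M))"
    by measurable
  have update: "?S (x(n := y)) = ?Sn x + g y" for x y
    by (simp add: sum.lessThan_Suc)
  have IH4: "integrable ?Pn (\<lambda>xs. norm (?Sn xs) ^ 4)" and IH0: "integral\<^sup>L ?Pn ?Sn = 0"
    and IH2: "(\<integral>xs. (norm (?Sn xs))\<^sup>2 \<partial>?Pn) = real n * v"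
    and IH4le: "(\<integral>xs. norm (?Sn xs) ^ 4 \<partial>?Pn) \<le> real n * M4 + 3 * real n * (real n - 1) * v\<^sup>2"
    using Suc.IH unfolding v_def M4_def by auto
  have g1: "integrable M g" and g2: "integrable M (\<lambda>x. (norm (g x))\<^sup>2)"
    using integrable_of_norm_power[OF _ g4] integrable_norm_power_le[OF _ g4, of 2] by auto
  have Sn1: "integrable ?Pn ?Sn"
    using Pn.integrable_of_norm_power[OF _ IH4] by simp
  have Sn2: "integrable ?Pn (\<lambda>xs. (norm (?Sn xs))\<^sup>2)"
    using Pn.integrable_norm_power_le[OF _ IH4, of 2] by simp
  have sum1: "integrable (?Pn \<Otimes>\<^sub>M M) (\<lambda>\<omega>. ?Sn (fst \<omega>) + g (snd \<omega>))"
    using PM.integrable_comp_fst[OF Sn1] PM.integrable_comp_snd[OF g1] by auto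
  note sum2 = PM.integrable_norm_add_sq_fst_snd[OF _ _ Sn2 g2 IH0]
  note sum4 = PM.integrable_norm_add_pow4_fst_snd[OF _ _ IH4 g4 IH0 g0]
  have "integral\<^sup>L (PiM {..<Suc n} (\<lambda>_. M)) ?S = 0"
    using integral_PiM_lessThan_Suc[of ?S n, unfolded update, OF _ sum1] sum1
      Bochner_Integration.integral_add[OF PM.integrable_comp_fst[OF Sn1] PM.integrable_comp_snd[OF g1]]
      PM.integral_comp_fst[of ?Sn] PM.integral_comp_snd[of g] IH0 g0 by simp
  moreover have "(\<integral>xs. (norm (?S xs))\<^sup>2 \<partial>PiM {..<Suc n} (\<lambda>_. M)) = real (Suc n) * v"
    using integral_PiM_lessThan_Suc[of "\<lambda>xs. (norm (?S xs))\<^sup>2" n, unfolded update, OF _ sum2]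
      PM.integral_norm_add_sq_fst_snd[OF _ _ Sn2 g2 IH0] IH2 unfolding v_def by (simp add: algebra_simps)
  moreover have "integrable (PiM {..<Suc n} (\<lambda>_. M)) (\<lambda>xs. norm (?S xs) ^ 4)"
    using integrable_PiM_lessThan_Suc[of "\<lambda>xs. norm (?S xs) ^ 4" n, unfolded update, OF _ sum4] by simp
  moreover have "(\<integral>xs. norm (?S xs) ^ 4 \<partial>PiM {..<Suc n} (\<lambda>_. M))
      \<le> real (Suc n) * M4 + 3 * real (Suc n) * (real (Suc n) - 1) * v\<^sup>2"
  proof -
    have "(\<integral>xs. norm (?S xs) ^ 4 \<partial>PiM {..<Suc n} (\<lambda>_. M))
        \<le> (\<integral>xs. norm (?Sn xs) ^ 4 \<partial>?Pn) + M4 + 6 * (real n * v * v)"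
      using integral_PiM_lessThan_Suc[of "\<lambda>xs. norm (?S xs) ^ 4" n, unfolded update, OF _ sum4]
        PM.integral_norm_add_pow4_fst_snd_le[OF _ _ IH4 g4 IH0 g0] IH2
      unfolding v_def M4_def by simp
    also have "\<dots> \<le> real (Suc n) * M4 + 3 * real (Suc n) * (real (Suc n) - 1) * v\<^sup>2"
      using IH4le by (simp add: algebra_simps power2_eq_square)
    finally show ?thesis .
  qed
  ultimately show ?case
    unfolding v_def M4_def by blast
qed

lemma (in prob_space)
  fixes g :: "'a \<Rightarrow> 'c::euclidean_space"
  assumes [measurable]: "g \<in> borel_measurable M"
    and g4: "integrable M (\<lambda>x. norm (g x) ^ 4)" and g0: "expectation g = 0" and m: "m > 0"
  defines "b \<equiv> \<lambda>xs. (1 / real m) *\<^sub>R (\<Sum>s<m. g (xs s))"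
    and "v \<equiv> expectation (\<lambda>x. (norm (g x))\<^sup>2)"
  shows integrable_sample_mean_pow4: "integrable (PiM {..<m} (\<lambda>_. M)) (\<lambda>xs. norm (b xs) ^ 4)"
    and integral_sample_mean: "integral\<^sup>L (PiM {..<m} (\<lambda>_. M)) b = 0"
    and integral_sample_mean_norm_sq: "(\<integral>xs. (norm (b xs))\<^sup>2 \<partial>PiM {..<m} (\<lambda>_. M)) = v / m"
    and variance_sample_mean_norm_sq_le:
      "(\<integral>xs. ((norm (b xs))\<^sup>2 - v / m)\<^sup>2 \<partial>PiM {..<m} (\<lambda>_. M))
        \<le> (expectation (\<lambda>x. norm (g x) ^ 4) + 2 * (real m - 1) * v\<^sup>2) / real m ^ 3"
proof -
  let ?P = "PiM {..<m} (\<lambda>_. M)" and ?S = "\<lambda>xs. \<Sum>s<m. g (xs s)"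
  define M4 where "M4 = expectation (\<lambda>x. norm (g x) ^ 4)"
  interpret P: prob_space ?P
    by (rule prob_space_PiM) (rule prob_space_axioms)
  have S4: "integrable ?P (\<lambda>xs. norm (?S xs) ^ 4)" and S0: "integral\<^sup>L ?P ?S = 0"
    and S2: "(\<integral>xs. (norm (?S xs))\<^sup>2 \<partial>?P) = real m * v"
    and S4_le: "(\<integral>xs. norm (?S xs) ^ 4 \<partial>?P) \<le> real m * M4 + 3 * real m * (real m - 1) * v\<^sup>2"
    using moments_sum_iid[OF _ g4 g0, of m] unfolding v_def M4_def by auto
  have norm_b: "norm (b xs) ^ k = norm (?S xs) ^ k / real m ^ k" for xs k
    unfolding b_def using m by (simp add: power_divide)
  show b4: "integrable ?P (\<lambda>xs. norm (b xs) ^ 4)"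
    unfolding norm_b using S4 by simp
  show "integral\<^sup>L ?P b = 0"
    unfolding b_def using S0 by simp
  show b2: "(\<integral>xs. (norm (b xs))\<^sup>2 \<partial>?P) = v / m"
    unfolding norm_b using S2 m by (simp add: power2_eq_square)
  have "(\<integral>xs. ((norm (b xs))\<^sup>2 - v / m)\<^sup>2 \<partial>?P) = (\<integral>xs. norm (b xs) ^ 4 \<partial>?P) - (v / m)\<^sup>2"
  proof -
    have b2_int: "integrable ?P (\<lambda>xs. (norm (b xs))\<^sup>2)"
      using P.integrable_norm_power_le[OF _ b4, of 2] unfolding b_def by simp
    have "((norm (b xs))\<^sup>2 - v / m)\<^sup>2 = norm (b xs) ^ 4 - 2 * (v / m) * (norm (b xs))\<^sup>2 + (v / m)\<^sup>2" for xs
      by (simp add: power2_eq_square power4_eq_xxxx algebra_simps)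
    then show ?thesis
      using b4 b2_int b2 by (simp add: P.prob_space power2_eq_square)
  qed
  also have "\<dots> \<le> (real m * M4 + 3 * real m * (real m - 1) * v\<^sup>2) / real m ^ 4 - (v / m)\<^sup>2"
    unfolding norm_b using S4_le by (simp add: divide_right_mono)
  also have "\<dots> = (M4 + (2 * real m - 3) * v\<^sup>2) / real m ^ 3"
    using m by (simp add: field_simps power2_eq_square power3_eq_cube power4_eq_xxxx)
  also have "\<dots> \<le> (M4 + 2 * (real m - 1) * v\<^sup>2) / real m ^ 3"
    by (intro divide_right_mono add_left_mono mult_right_mono) auto
  finally show "(\<integral>xs. ((norm (b xs))\<^sup>2 - v / m)\<^sup>2 \<partial>?P) \<le> (M4 + 2 * (real m - 1) * v\<^sup>2) / real m ^ 3" .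
qed

section \<open>The margin\<close>

lemma feat_cov_scaleR: "feat_cov D f (r *\<^sub>R u) (r *\<^sub>R u) = r\<^sup>2 * feat_cov D f u u"
  by (simp add: feat_cov_def power2_eq_square mult_ac)

lemma feat_trcov_eq_integral:
  fixes f :: "'x \<Rightarrow> 'a::euclidean_space"
  assumes [measurable]: "f \<in> borel_measurable D"
    and f2: "integrable D (\<lambda>x. (norm (f x - feat_mean D f))\<^sup>2)"
  shows "feat_trcov D f = (\<integral>x. (norm (f x - feat_mean D f))\<^sup>2 \<partial>D)"
proof -
  define g where "g x = f x - feat_mean D f" for x
  have [measurable]: "g \<in> borel_measurable D"
    unfolding g_def by measurable
  have coord: "integrable D (\<lambda>x. (g x \<bullet> b) * (g x \<bullet> b))" for b :: 'a
    by (rule Bochner_Integration.integrable_bound[of _ "\<lambda>x. (norm b)\<^sup>2 * (norm (g x))\<^sup>2"])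
      (use f2 power2_inner_le[of "g _" b] in \<open>auto simp: g_def power2_eq_square mult.commute\<close>)
  have "(norm (g x))\<^sup>2 = (\<Sum>b\<in>Basis. (g x \<bullet> b) * (g x \<bullet> b))" for x
    unfolding power2_norm_eq_inner by (rule euclidean_inner)
  then have "(\<integral>x. (norm (g x))\<^sup>2 \<partial>D) = (\<Sum>b\<in>Basis. \<integral>x. (g x \<bullet> b) * (g x \<bullet> b) \<partial>D)"
    using coord by (simp add: Bochner_Integration.integral_sum)
  then show ?thesis
    by (simp add: feat_trcov_def feat_cov_def g_def)
qed

lemma (in prob_space)
  fixes f :: "'a \<Rightarrow> 'c::euclidean_space"
  assumes [measurable]: "f \<in> borel_measurable M"
    and f4: "integrable M (\<lambda>x. norm (f x - feat_mean M f) ^ 4)"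
  shows expectation_centered_feature: "expectation (\<lambda>x. f x - feat_mean M f) = 0"
    and feat_trcov_eq_expectation: "feat_trcov M f = expectation (\<lambda>x. (norm (f x - feat_mean M f))\<^sup>2)"
proof -
  have g1: "integrable M (\<lambda>x. f x - feat_mean M f)"
    using integrable_of_norm_power[OF _ f4] by simp
  then have "integrable M f"
    using Bochner_Integration.integrable_add[OF g1, of "\<lambda>_. feat_mean M f"] by simp
  then show "expectation (\<lambda>x. f x - feat_mean M f) = 0"
    by (simp add: prob_space feat_mean_def)
  show "feat_trcov M f = expectation (\<lambda>x. (norm (f x - feat_mean M f))\<^sup>2)"
    using integrable_norm_power_le[OF _ f4, of 2] by (intro feat_trcov_eq_integral) auto
qed

lemma emp_mean_minus:
  assumes "m > 0"
  shows "emp_mean m f xs - \<mu> = (1 / real m) *\<^sub>R (\<Sum>s<m. f (xs s) - \<mu>)"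
  using assms by (simp add: emp_mean_def sum_subtractf sum_constant_scaleR scaleR_diff_right)

lemma norm_diff_sq_sub_norm_diff_sq:
  fixes g b c \<delta> :: "'a::real_inner"
  shows "(norm (g - c - \<delta>))\<^sup>2 - (norm (g - b))\<^sup>2
    = (norm \<delta>)\<^sup>2 + 2 * (g \<bullet> (b - c - \<delta>)) + 2 * (\<delta> \<bullet> c) + (norm c)\<^sup>2 - (norm b)\<^sup>2"
  by (simp add: power2_norm_eq_inner inner_diff_left inner_diff_right inner_commute algebra_simps)

lemma margin_eq:
  "margin m f ((xs, ys), x) = (norm (\<mu>j - \<mu>i))\<^sup>2
    + 2 * ((f x - \<mu>i) \<bullet> ((emp_mean m f xs - \<mu>i) - (emp_mean m f ys - \<mu>j) - (\<mu>j - \<mu>i)))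
    + 2 * ((\<mu>j - \<mu>i) \<bullet> (emp_mean m f ys - \<mu>j))
    + (norm (emp_mean m f ys - \<mu>j))\<^sup>2 - (norm (emp_mean m f xs - \<mu>i))\<^sup>2"
  using norm_diff_sq_sub_norm_diff_sq[of "f x - \<mu>i" "emp_mean m f ys - \<mu>j" "\<mu>j - \<mu>i" "emp_mean m f xs - \<mu>i"]
  by (simp add: margin_def)

lemma measurable_margin [measurable]:
  fixes f :: "'x \<Rightarrow> 'a::euclidean_space"
  assumes [measurable]: "f \<in> borel_measurable Di" "f \<in> borel_measurable Dj"
  shows "margin m f \<in> borel_measurable (episode_space m Di Dj)"
proof -
  have "margin m f = (\<lambda>\<omega>. (norm (f (snd \<omega>) - emp_mean m f (snd (fst \<omega>))))\<^sup>2
      - (norm (f (snd \<omega>) - emp_mean m f (fst (fst \<omega>))))\<^sup>2)"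
    by (auto simp: margin_def fun_eq_iff)
  then show ?thesis
    unfolding episode_space_def emp_mean_def by simp
qed

lemma
  fixes Di Dj :: "'x measure" and gi gj :: "'x \<Rightarrow> 'a::euclidean_space"
    and m :: nat and \<delta> :: 'a and lamT lamS lamQ :: real
  assumes Di: "prob_space Di" and Dj: "prob_space Dj"
    and gim[measurable]: "gi \<in> borel_measurable Di" and gjm[measurable]: "gj \<in> borel_measurable Dj"
    and gi4: "integrable Di (\<lambda>x. norm (gi x) ^ 4)" and gj4: "integrable Dj (\<lambda>y. norm (gj y) ^ 4)"
    and gi0: "integral\<^sup>L Di gi = 0" and gj0: "integral\<^sup>L Dj gj = 0"
    and m: "m > 0" and lam: "lamT > 0" "lamS > 0" "lamQ > 0"
  defines "bi \<equiv> \<lambda>xs. (1 / real m) *\<^sub>R (\<Sum>s<m. gi (xs s))"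
    and "bj \<equiv> \<lambda>ys. (1 / real m) *\<^sub>R (\<Sum>s<m. gj (ys s))"
    and "vi \<equiv> \<integral>x. (norm (gi x))\<^sup>2 \<partial>Di" and "vj \<equiv> \<integral>y. (norm (gj y))\<^sup>2 \<partial>Dj"
    and "S \<equiv> PiM {..<m} (\<lambda>_. Di) \<Otimes>\<^sub>M PiM {..<m} (\<lambda>_. Dj)"
  defines "K \<equiv> \<lambda>\<omega>. 2 * (\<delta> \<bullet> bj (snd \<omega>)) + (norm (bj (snd \<omega>)))\<^sup>2 - (norm (bi (fst \<omega>)))\<^sup>2
      - (vj / m - vi / m)"
  shows integral_sample_means_diff: "(\<integral>\<omega>. bi (fst \<omega>) - bj (snd \<omega>) \<partial>S) = 0"
    and integrable_norm_sq_sample_means_diff: "integrable S (\<lambda>\<omega>. (norm (bi (fst \<omega>) - bj (snd \<omega>)))\<^sup>2)"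
    and integral_norm_sq_sample_means_diff:
      "(\<integral>\<omega>. (norm (bi (fst \<omega>) - bj (snd \<omega>)))\<^sup>2 \<partial>S) = vi / m + vj / m"
    and integrable_square_sample_means_noise: "integrable S (\<lambda>\<omega>. (K \<omega>)\<^sup>2)"
    and integral_square_sample_means_noise_le: "(\<integral>\<omega>. (K \<omega>)\<^sup>2 \<partial>S)
      \<le> (lamT + lamS + lamQ) * ((norm \<delta>)\<^sup>2 * (vj / m) / lamT + (norm \<delta>)\<^sup>2 * (vj / m) / lamS
        + (((\<integral>x. norm (gi x) ^ 4 \<partial>Di) + 2 * (real m - 1) * vi\<^sup>2) / real m ^ 3
          + ((\<integral>y. norm (gj y) ^ 4 \<partial>Dj) + 2 * (real m - 1) * vj\<^sup>2) / real m ^ 3) / lamQ)"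
proof -
  interpret Di: prob_space Di by fact
  interpret Dj: prob_space Dj by fact
  let ?A = "PiM {..<m} (\<lambda>_. Di)" and ?B = "PiM {..<m} (\<lambda>_. Dj)"
  interpret A: prob_space ?A
    by (rule prob_space_PiM) (rule Di)
  interpret B: prob_space ?B
    by (rule prob_space_PiM) (rule Dj)
  interpret S: pair_prob_space ?A ?B
    by unfold_locales
  have bim[measurable]: "bi \<in> borel_measurable ?A" and bjm[measurable]: "bj \<in> borel_measurable ?B"
    unfolding bi_def bj_def by measurable
  have bi4: "integrable ?A (\<lambda>xs. norm (bi xs) ^ 4)" and bi0: "integral\<^sup>L ?A bi = 0"
    and bi2: "(\<integral>xs. (norm (bi xs))\<^sup>2 \<partial>?A) = vi / m"
    and Vbi: "(\<integral>xs. ((norm (bi xs))\<^sup>2 - vi / m)\<^sup>2 \<partial>?A)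
      \<le> ((\<integral>x. norm (gi x) ^ 4 \<partial>Di) + 2 * (real m - 1) * vi\<^sup>2) / real m ^ 3"
    using Di.integrable_sample_mean_pow4[OF _ gi4 gi0 m] Di.integral_sample_mean[OF _ gi4 gi0 m]
      Di.integral_sample_mean_norm_sq[OF _ gi4 gi0 m] Di.variance_sample_mean_norm_sq_le[OF _ gi4 gi0 m]
    unfolding bi_def vi_def by simp_all
  have bj4: "integrable ?B (\<lambda>ys. norm (bj ys) ^ 4)" and bj0: "integral\<^sup>L ?B bj = 0"
    and bj2: "(\<integral>ys. (norm (bj ys))\<^sup>2 \<partial>?B) = vj / m"
    and Vbj: "(\<integral>ys. ((norm (bj ys))\<^sup>2 - vj / m)\<^sup>2 \<partial>?B)
      \<le> ((\<integral>y. norm (gj y) ^ 4 \<partial>Dj) + 2 * (real m - 1) * vj\<^sup>2) / real m ^ 3"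
    using Dj.integrable_sample_mean_pow4[OF _ gj4 gj0 m] Dj.integral_sample_mean[OF _ gj4 gj0 m]
      Dj.integral_sample_mean_norm_sq[OF _ gj4 gj0 m] Dj.variance_sample_mean_norm_sq_le[OF _ gj4 gj0 m]
    unfolding bj_def vj_def by simp_all
  have bi2_int: "integrable ?A (\<lambda>xs. (norm (bi xs))\<^sup>2)" and bj2_int: "integrable ?B (\<lambda>ys. (norm (bj ys))\<^sup>2)"
    using A.integrable_norm_power_le[OF bim bi4] B.integrable_norm_power_le[OF bjm bj4] by auto
  show "(\<integral>\<omega>. bi (fst \<omega>) - bj (snd \<omega>) \<partial>S) = 0"
    and "integrable S (\<lambda>\<omega>. (norm (bi (fst \<omega>) - bj (snd \<omega>)))\<^sup>2)"
    and "(\<integral>\<omega>. (norm (bi (fst \<omega>) - bj (snd \<omega>)))\<^sup>2 \<partial>S) = vi / m + vj / m"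
    unfolding S_def using S.integral_diff_fst_snd[OF bim bjm bi2_int bj2_int bi0 bj0]
      S.integrable_norm_diff_sq_fst_snd[OF bim bjm bi2_int bj2_int bi0 bj0]
      S.integral_norm_diff_sq_fst_snd[OF bim bjm bi2_int bj2_int bi0 bj0]
    by (simp_all only: bi2 bj2)
  show "integrable S (\<lambda>\<omega>. (K \<omega>)\<^sup>2)"
    using S.integrable_square_support_noise[OF bim bjm bi4 bj4 lam, of \<delta>]
    unfolding S_def K_def bi2 bj2 .
  have "(\<integral>\<omega>. (K \<omega>)\<^sup>2 \<partial>S)
      \<le> (lamT + lamS + lamQ) * ((norm \<delta>)\<^sup>2 * (vj / m) / lamT + (norm \<delta>)\<^sup>2 * (vj / m) / lamS
        + ((\<integral>xs. ((norm (bi xs))\<^sup>2 - vi / m)\<^sup>2 \<partial>?A) + (\<integral>ys. ((norm (bj ys))\<^sup>2 - vj / m)\<^sup>2 \<partial>?B)) / lamQ)"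
    using S.integral_square_support_noise_le[OF bim bjm bi4 bj4 lam, of \<delta>]
    unfolding S_def K_def bi2 bj2 .
  also have "\<dots> \<le> (lamT + lamS + lamQ) * ((norm \<delta>)\<^sup>2 * (vj / m) / lamT + (norm \<delta>)\<^sup>2 * (vj / m) / lamS
      + (((\<integral>x. norm (gi x) ^ 4 \<partial>Di) + 2 * (real m - 1) * vi\<^sup>2) / real m ^ 3
        + ((\<integral>y. norm (gj y) ^ 4 \<partial>Dj) + 2 * (real m - 1) * vj\<^sup>2) / real m ^ 3) / lamQ)"
    using Vbi Vbj lam by (intro mult_left_mono add_left_mono divide_right_mono add_mono) auto
  finally show "(\<integral>\<omega>. (K \<omega>)\<^sup>2 \<partial>S)
      \<le> (lamT + lamS + lamQ) * ((norm \<delta>)\<^sup>2 * (vj / m) / lamT + (norm \<delta>)\<^sup>2 * (vj / m) / lamS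
        + (((\<integral>x. norm (gi x) ^ 4 \<partial>Di) + 2 * (real m - 1) * vi\<^sup>2) / real m ^ 3
          + ((\<integral>y. norm (gj y) ^ 4 \<partial>Dj) + 2 * (real m - 1) * vj\<^sup>2) / real m ^ 3) / lamQ)" .
qed

lemma
  fixes Di Dj :: "'x measure" and f :: "'x \<Rightarrow> 'a::euclidean_space"
    and m :: nat and lamT lamS lamQ :: real
  assumes Di: "prob_space Di" and Dj: "prob_space Dj"
    and [measurable]: "f \<in> borel_measurable Di" "f \<in> borel_measurable Dj"
    and fi4: "integrable Di (\<lambda>x. norm (f x - feat_mean Di f) ^ 4)"
    and fj4: "integrable Dj (\<lambda>x. norm (f x - feat_mean Dj f) ^ 4)"
    and m: "m > 0" and lam: "lamT > 0" "lamS > 0" "lamQ > 0"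
  defines "\<delta> \<equiv> feat_mean Dj f - feat_mean Di f"
    and "vi \<equiv> feat_trcov Di f" and "vj \<equiv> feat_trcov Dj f"
  defines "e \<equiv> (norm \<delta>)\<^sup>2 + (vj - vi) / m"
  shows integrable_margin_deviation_sq:
      "integrable (episode_space m Di Dj) (\<lambda>\<omega>. (margin m f \<omega> - e)\<^sup>2)"
    and integral_margin_deviation_sq_le:
      "(\<integral>\<omega>. (margin m f \<omega> - e)\<^sup>2 \<partial>episode_space m Di Dj)
        \<le> 4 * feat_cov Di f \<delta> \<delta> + 4 * vi * (vi / m + vj / m)
          + (lamT + lamS + lamQ) * ((norm \<delta>)\<^sup>2 * (vj / m) / lamT + (norm \<delta>)\<^sup>2 * (vj / m) / lamS
            + ((feat_M4 Di f + 2 * (real m - 1) * vi\<^sup>2) / real m ^ 3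
              + (feat_M4 Dj f + 2 * (real m - 1) * vj\<^sup>2) / real m ^ 3) / lamQ)"
proof -
  interpret Di: prob_space Di by fact
  interpret Dj: prob_space Dj by fact
  let ?S = "PiM {..<m} (\<lambda>_. Di) \<Otimes>\<^sub>M PiM {..<m} (\<lambda>_. Dj)"
  interpret E: pair_prob_space ?S Di
    by (simp add: pair_prob_space_def pair_sigma_finite_def prob_space_imp_sigma_finite
        prob_space_pair prob_space_PiM Di Dj Di.sigma_finite_measure_axioms)
  define gi gj where "gi = (\<lambda>x. f x - feat_mean Di f)" and "gj = (\<lambda>y. f y - feat_mean Dj f)"
  define bi bj where "bi = (\<lambda>xs. (1 / real m) *\<^sub>R (\<Sum>s<m. gi (xs s)))"
    and "bj = (\<lambda>ys. (1 / real m) *\<^sub>R (\<Sum>s<m. gj (ys s)))"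
  define H K where "H = (\<lambda>\<omega>. bi (fst \<omega>) - bj (snd \<omega>))"
    and "K = (\<lambda>\<omega>. 2 * (\<delta> \<bullet> bj (snd \<omega>)) + (norm (bj (snd \<omega>)))\<^sup>2 - (norm (bi (fst \<omega>)))\<^sup>2
      - (vj / m - vi / m))"
  have gim[measurable]: "gi \<in> borel_measurable Di" and gjm[measurable]: "gj \<in> borel_measurable Dj"
    and Hm[measurable]: "H \<in> borel_measurable ?S" and Km[measurable]: "K \<in> borel_measurable ?S"
    unfolding gi_def gj_def H_def K_def bi_def bj_def by measurable
  have gi4: "integrable Di (\<lambda>x. norm (gi x) ^ 4)" and gj4: "integrable Dj (\<lambda>y. norm (gj y) ^ 4)"
    using fi4 fj4 by (simp_all add: gi_def gj_def)
  have gi0: "integral\<^sup>L Di gi = 0" and gj0: "integral\<^sup>L Dj gj = 0"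
    using Di.expectation_centered_feature[OF _ fi4] Dj.expectation_centered_feature[OF _ fj4]
    by (simp_all add: gi_def gj_def)
  have vi: "vi = (\<integral>x. (norm (gi x))\<^sup>2 \<partial>Di)" and vj: "vj = (\<integral>y. (norm (gj y))\<^sup>2 \<partial>Dj)"
    using Di.feat_trcov_eq_expectation[OF _ fi4] Dj.feat_trcov_eq_expectation[OF _ fj4]
    by (simp_all add: vi_def vj_def gi_def gj_def)
  note sample_means = integral_sample_means_diff[OF Di Dj gim gjm gi4 gj4 gi0 gj0 m lam]
    integrable_norm_sq_sample_means_diff[OF Di Dj gim gjm gi4 gj4 gi0 gj0 m lam]
    integral_norm_sq_sample_means_diff[OF Di Dj gim gjm gi4 gj4 gi0 gj0 m lam]
    integrable_square_sample_means_noise[OF Di Dj gim gjm gi4 gj4 gi0 gj0 m lam, of \<delta>]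
    integral_square_sample_means_noise_le[OF Di Dj gim gjm gi4 gj4 gi0 gj0 m lam, of \<delta>]
  have H0: "integral\<^sup>L ?S H = 0" and H2: "integrable ?S (\<lambda>\<omega>. (norm (H \<omega>))\<^sup>2)"
    and EH2: "(\<integral>\<omega>. (norm (H \<omega>))\<^sup>2 \<partial>?S) = vi / m + vj / m"
    and K2: "integrable ?S (\<lambda>\<omega>. (K \<omega>)\<^sup>2)"
    and EK2: "(\<integral>\<omega>. (K \<omega>)\<^sup>2 \<partial>?S)
      \<le> (lamT + lamS + lamQ) * ((norm \<delta>)\<^sup>2 * (vj / m) / lamT + (norm \<delta>)\<^sup>2 * (vj / m) / lamS
        + ((feat_M4 Di f + 2 * (real m - 1) * vi\<^sup>2) / real m ^ 3
          + (feat_M4 Dj f + 2 * (real m - 1) * vj\<^sup>2) / real m ^ 3) / lamQ)"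
    using sample_means unfolding H_def K_def bi_def bj_def vi vj feat_M4_def gi_def gj_def .
  have gi2: "integrable Di (\<lambda>x. (norm (gi x))\<^sup>2)"
    using Di.integrable_norm_power_le[OF _ gi4] by simp
  have margin: "margin m f \<omega> - e = 2 * (gi (snd \<omega>) \<bullet> (H (fst \<omega>) - \<delta>)) + K (fst \<omega>)" for \<omega>
  proof -
    obtain xs ys x where \<omega>: "\<omega> = ((xs, ys), x)"
      by (metis prod.collapse)
    have "emp_mean m f xs - feat_mean Di f = bi xs" and "emp_mean m f ys - feat_mean Dj f = bj ys"
      using emp_mean_minus[OF m] by (simp_all add: bi_def bj_def gi_def gj_def)
    then show ?thesis
      using margin_eq[of m f xs ys x "feat_mean Dj f" "feat_mean Di f"]
      by (simp add: \<omega> H_def K_def e_def \<delta>_def gi_def diff_divide_distrib algebra_simps)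
  qed
  have P: "episode_space m Di Dj = ?S \<Otimes>\<^sub>M Di"
    by (simp add: episode_space_def)
  show "integrable (episode_space m Di Dj) (\<lambda>\<omega>. (margin m f \<omega> - e)\<^sup>2)"
    unfolding P margin using E.integrable_square_margin_noise[OF Hm Km gim H2 H0 K2 gi2 gi0] .
  have "(\<integral>\<omega>. (margin m f \<omega> - e)\<^sup>2 \<partial>episode_space m Di Dj)
      \<le> 4 * (\<integral>x. (gi x \<bullet> \<delta>)\<^sup>2 \<partial>Di) + 4 * vi * (vi / m + vj / m) + (\<integral>\<omega>. (K \<omega>)\<^sup>2 \<partial>?S)"
    unfolding P margin using E.integral_square_margin_noise_le[OF Hm Km gim H2 H0 K2 gi2 gi0, of \<delta>]
    unfolding EH2 vi[symmetric] by simp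
  moreover have "(\<integral>x. (gi x \<bullet> \<delta>)\<^sup>2 \<partial>Di) = feat_cov Di f \<delta> \<delta>"
    by (simp add: feat_cov_def gi_def power2_eq_square)
  ultimately show "(\<integral>\<omega>. (margin m f \<omega> - e)\<^sup>2 \<partial>episode_space m Di Dj)
      \<le> 4 * feat_cov Di f \<delta> \<delta> + 4 * vi * (vi / m + vj / m)
        + (lamT + lamS + lamQ) * ((norm \<delta>)\<^sup>2 * (vj / m) / lamT + (norm \<delta>)\<^sup>2 * (vj / m) / lamS
          + ((feat_M4 Di f + 2 * (real m - 1) * vi\<^sup>2) / real m ^ 3
            + (feat_M4 Dj f + 2 * (real m - 1) * vj\<^sup>2) / real m ^ 3) / lamQ)"
    using EK2 by linarith
qed

lemma prob_margin_nonpos_le: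
  fixes Di Dj :: "'x measure" and f :: "'x \<Rightarrow> 'a::euclidean_space"
    and m :: nat and lamT lamS lamQ :: real
  assumes Di: "prob_space Di" and Dj: "prob_space Dj"
    and [measurable]: "f \<in> borel_measurable Di" "f \<in> borel_measurable Dj"
    and fi4: "integrable Di (\<lambda>x. norm (f x - feat_mean Di f) ^ 4)"
    and fj4: "integrable Dj (\<lambda>x. norm (f x - feat_mean Dj f) ^ 4)"
    and m: "m > 0" and lam: "lamT > 0" "lamS > 0" "lamQ > 0"
  defines "\<delta> \<equiv> feat_mean Dj f - feat_mean Di f"
    and "vi \<equiv> feat_trcov Di f" and "vj \<equiv> feat_trcov Dj f"
  defines "e \<equiv> (norm \<delta>)\<^sup>2 + (vj - vi) / m"
  assumes e: "e > 0"
  shows "measure (episode_space m Di Dj) {\<omega> \<in> space (episode_space m Di Dj). margin m f \<omega> \<le> 0}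
    \<le> (4 * feat_cov Di f \<delta> \<delta> + 4 * vi * (vi / m + vj / m)
      + (lamT + lamS + lamQ) * ((norm \<delta>)\<^sup>2 * (vj / m) / lamT + (norm \<delta>)\<^sup>2 * (vj / m) / lamS
        + ((feat_M4 Di f + 2 * (real m - 1) * vi\<^sup>2) / real m ^ 3
          + (feat_M4 Dj f + 2 * (real m - 1) * vj\<^sup>2) / real m ^ 3) / lamQ)) / e\<^sup>2"
proof -
  interpret P: prob_space "episode_space m Di Dj"
    unfolding episode_space_def using Di Dj by (intro prob_space_pair prob_space_PiM)
  have "measure (episode_space m Di Dj) {\<omega> \<in> space (episode_space m Di Dj). e + (margin m f \<omega> - e) \<le> 0}
      \<le> (\<integral>\<omega>. (margin m f \<omega> - e)\<^sup>2 \<partial>episode_space m Di Dj) / e\<^sup>2"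
    using integrable_margin_deviation_sq[OF Di Dj _ _ fi4 fj4 m lam] e
    by (intro P.prob_add_nonpos_le_second_moment) (simp_all add: \<delta>_def vi_def vj_def e_def)
  also have "\<dots> \<le> (4 * feat_cov Di f \<delta> \<delta> + 4 * vi * (vi / m + vj / m)
      + (lamT + lamS + lamQ) * ((norm \<delta>)\<^sup>2 * (vj / m) / lamT + (norm \<delta>)\<^sup>2 * (vj / m) / lamS
        + ((feat_M4 Di f + 2 * (real m - 1) * vi\<^sup>2) / real m ^ 3
          + (feat_M4 Dj f + 2 * (real m - 1) * vj\<^sup>2) / real m ^ 3) / lamQ)) / e\<^sup>2"
    using integral_margin_deviation_sq_le[OF Di Dj _ _ fi4 fj4 m lam]
    unfolding \<delta>_def[symmetric] vi_def[symmetric] vj_def[symmetric] e_def[symmetric]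
    by (intro divide_right_mono) simp_all
  finally show ?thesis
    by simp
qed

lemma margin_numerator_le:
  fixes d vi vj C M4i M4j lamT lamS lamQ :: real and m :: nat
  assumes m: "m \<ge> 1" and v: "vi \<ge> 0" "vj \<ge> 0"
    and lam: "lamT > 0" "lamS > 0" "lamQ > 0"
  defines "kap \<equiv> lamT + lamS + lamQ"
  defines "aT \<equiv> 4 * kap / (real m * lamT)" and "aS \<equiv> kap / (real m * lamS)"
    and "aQ \<equiv> kap / (real m ^ 3 * lamQ)"
  shows "4 * (d\<^sup>2 * C) + 4 * vi * (vi / m + vj / m)
        + kap * (d\<^sup>2 * (vj / m) / lamT + d\<^sup>2 * (vj / m) / lamS
          + ((M4i + 2 * (real m - 1) * vi\<^sup>2) / real m ^ 3
            + (M4j + 2 * (real m - 1) * vj\<^sup>2) / real m ^ 3) / lamQ)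
      \<le> 4 * (d\<^sup>2 * C) + aT * (vi + vj)\<^sup>2 + aT / 4 * (vi + vj) * d\<^sup>2 + aS * (vi + vj) * d\<^sup>2
        + aQ * (M4i + M4j + 2 * (real m - 1) * (vi + vj)\<^sup>2)"
proof -
  have m0: "real m > 0"
    using m by simp
  have kT: "1 \<le> kap / lamT" and kS: "1 \<le> kap / lamS" and kQ: "0 \<le> kap / lamQ"
    using lam by (simp_all add: kap_def field_simps)
  have var_term: "4 * vi * (vi / m + vj / m) \<le> aT * (vi + vj)\<^sup>2"
  proof -
    have "4 * vi * (vi / m + vj / m) = (4 / m) * (vi * (vi + vj))"
      using m0 by (simp add: field_simps)
    also have "\<dots> \<le> (4 / m) * ((kap / lamT) * (vi + vj)\<^sup>2)"
    proof (intro mult_left_mono)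
      have "vi * (vi + vj) \<le> (vi + vj)\<^sup>2"
        using v by (simp add: power2_eq_square mult_right_mono)
      also have "\<dots> \<le> (kap / lamT) * (vi + vj)\<^sup>2"
        using mult_right_mono[OF kT, of "(vi + vj)\<^sup>2"] by simp
      finally show "vi * (vi + vj) \<le> (kap / lamT) * (vi + vj)\<^sup>2" .
    qed simp
    also have "\<dots> = aT * (vi + vj)\<^sup>2"
      by (simp add: aT_def)
    finally show ?thesis .
  qed
  have mean_terms: "kap * (d\<^sup>2 * (vj / m) / lamT) \<le> aT / 4 * (vi + vj) * d\<^sup>2"
    "kap * (d\<^sup>2 * (vj / m) / lamS) \<le> aS * (vi + vj) * d\<^sup>2"
    using v lam m0 by (simp_all add: aT_def aS_def kap_def field_simps mult_left_mono)
  have fourth_moment_term: "kap * (((M4i + 2 * (real m - 1) * vi\<^sup>2) / real m ^ 3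
        + (M4j + 2 * (real m - 1) * vj\<^sup>2) / real m ^ 3) / lamQ)
      \<le> aQ * (M4i + M4j + 2 * (real m - 1) * (vi + vj)\<^sup>2)"
  proof -
    have "2 * (real m - 1) * (vi\<^sup>2 + vj\<^sup>2) \<le> 2 * (real m - 1) * (vi + vj)\<^sup>2"
      using v m by (intro mult_left_mono) (auto simp: power2_eq_square algebra_simps)
    then have "(M4i + 2 * (real m - 1) * vi\<^sup>2) + (M4j + 2 * (real m - 1) * vj\<^sup>2)
        \<le> M4i + M4j + 2 * (real m - 1) * (vi + vj)\<^sup>2"
      by (simp add: algebra_simps)
    have "kap * (((M4i + 2 * (real m - 1) * vi\<^sup>2) / real m ^ 3
        + (M4j + 2 * (real m - 1) * vj\<^sup>2) / real m ^ 3) / lamQ)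
      = (kap / lamQ) * (((M4i + 2 * (real m - 1) * vi\<^sup>2) + (M4j + 2 * (real m - 1) * vj\<^sup>2)) / real m ^ 3)"
      using lam m0 by (simp add: field_simps)
    also have "\<dots> \<le> (kap / lamQ) * ((M4i + M4j + 2 * (real m - 1) * (vi + vj)\<^sup>2) / real m ^ 3)"
      using \<open>(M4i + 2 * (real m - 1) * vi\<^sup>2) + (M4j + 2 * (real m - 1) * vj\<^sup>2)
        \<le> M4i + M4j + 2 * (real m - 1) * (vi + vj)\<^sup>2\<close> kQ m0
      by (intro mult_left_mono divide_right_mono) auto
    also have "\<dots> = aQ * (M4i + M4j + 2 * (real m - 1) * (vi + vj)\<^sup>2)"
      by (simp add: aQ_def)
    finally show ?thesis .
  qed
  show ?thesis
    using var_term mean_terms fourth_moment_term by (simp only: distrib_left)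
qed

lemma margin_bound_normalize:
  fixes d vi vj C M4i M4j lamT lamS lamQ :: real and m :: nat
  assumes d: "d > 0" and m: "m \<ge> 1" and v: "vi \<ge> 0" "vj \<ge> 0"
    and lam: "lamT > 0" "lamS > 0" "lamQ > 0"
  defines "kap \<equiv> lamT + lamS + lamQ"
  defines "aT \<equiv> 4 * kap / (real m * lamT)" and "aS \<equiv> kap / (real m * lamS)"
    and "aQ \<equiv> kap / (real m ^ 3 * lamQ)" and "V \<equiv> (vi + vj) / d\<^sup>2"
  shows "(4 * (d\<^sup>2 * C) + 4 * vi * (vi / m + vj / m)
        + kap * (d\<^sup>2 * (vj / m) / lamT + d\<^sup>2 * (vj / m) / lamS
          + ((M4i + 2 * (real m - 1) * vi\<^sup>2) / real m ^ 3
            + (M4j + 2 * (real m - 1) * vj\<^sup>2) / real m ^ 3) / lamQ))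
      / (d\<^sup>2 + (vj - vi) / m)\<^sup>2
    \<le> (4 * (C / d\<^sup>2) + aT * V\<^sup>2 + (aT / 4 + aS) * V + aQ * ((M4i + M4j) / d ^ 4 + 2 * (real m - 1) * V\<^sup>2))
      / (1 + (vj - vi) / (real m * d\<^sup>2))\<^sup>2"
proof -
  have m0: "real m > 0"
    using m by simp
  have "d ^ 4 * (4 * (C / d\<^sup>2) + aT * V\<^sup>2 + (aT / 4 + aS) * V
      + aQ * ((M4i + M4j) / d ^ 4 + 2 * (real m - 1) * V\<^sup>2))
    = 4 * (d\<^sup>2 * C) + aT * (vi + vj)\<^sup>2 + aT / 4 * (vi + vj) * d\<^sup>2 + aS * (vi + vj) * d\<^sup>2
      + aQ * (M4i + M4j + 2 * (real m - 1) * (vi + vj)\<^sup>2)"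
    using d by (simp add: V_def field_simps power2_eq_square power4_eq_xxxx)
  with margin_numerator_le[OF m v lam, of d C M4i M4j, folded kap_def, folded aT_def aS_def aQ_def]
  have "4 * (d\<^sup>2 * C) + 4 * vi * (vi / m + vj / m)
        + kap * (d\<^sup>2 * (vj / m) / lamT + d\<^sup>2 * (vj / m) / lamS
          + ((M4i + 2 * (real m - 1) * vi\<^sup>2) / real m ^ 3
            + (M4j + 2 * (real m - 1) * vj\<^sup>2) / real m ^ 3) / lamQ)
      \<le> d ^ 4 * (4 * (C / d\<^sup>2) + aT * V\<^sup>2 + (aT / 4 + aS) * V
        + aQ * ((M4i + M4j) / d ^ 4 + 2 * (real m - 1) * V\<^sup>2))"
    by linarith
  then have "(4 * (d\<^sup>2 * C) + 4 * vi * (vi / m + vj / m)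
        + kap * (d\<^sup>2 * (vj / m) / lamT + d\<^sup>2 * (vj / m) / lamS
          + ((M4i + 2 * (real m - 1) * vi\<^sup>2) / real m ^ 3
            + (M4j + 2 * (real m - 1) * vj\<^sup>2) / real m ^ 3) / lamQ)) / (d\<^sup>2 + (vj - vi) / m)\<^sup>2
      \<le> d ^ 4 * (4 * (C / d\<^sup>2) + aT * V\<^sup>2 + (aT / 4 + aS) * V
        + aQ * ((M4i + M4j) / d ^ 4 + 2 * (real m - 1) * V\<^sup>2)) / (d\<^sup>2 + (vj - vi) / m)\<^sup>2"
    by (rule divide_right_mono) simp
  also have "\<dots> = (4 * (C / d\<^sup>2) + aT * V\<^sup>2 + (aT / 4 + aS) * V
        + aQ * ((M4i + M4j) / d ^ 4 + 2 * (real m - 1) * V\<^sup>2)) / (1 + (vj - vi) / (real m * d\<^sup>2))\<^sup>2"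
  proof -
    have "d\<^sup>2 + (vj - vi) / m = d\<^sup>2 * (1 + (vj - vi) / (real m * d\<^sup>2))"
      using d m0 by (simp add: field_simps)
    then show ?thesis
      using d by (simp add: power_mult_distrib power4_eq_xxxx power2_eq_square)
  qed
  finally show ?thesis .
qed

theorem mainTheorem3:
  fixes Di Dj :: "'x measure" and f :: "'x \<Rightarrow> 'a::euclidean_space"
    and m :: nat and lamT lamS lamQ :: real
  assumes "prob_space Di" and "prob_space Dj"
    and "f \<in> borel_measurable Di" and "f \<in> borel_measurable Dj"
    and "integrable Di f" and "integrable Dj f"
    and "integrable Di (\<lambda>x. norm (f x - feat_mean Di f) ^ 4)"
    and "integrable Dj (\<lambda>x. norm (f x - feat_mean Dj f) ^ 4)"
    and "m \<ge> 1"
    and "norm (feat_mean Dj f - feat_mean Di f) > 0"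
    and "norm (feat_mean Dj f - feat_mean Di f) ^ 2
           + (feat_trcov Dj f - feat_trcov Di f) / real m > 0"
    and "lamT > 0" and "lamS > 0" and "lamQ > 0"
  shows
    "let d = norm (feat_mean Dj f - feat_mean Di f);
         u = (1 / d) *\<^sub>R (feat_mean Dj f - feat_mean Di f);
         vi = feat_trcov Di f; vj = feat_trcov Dj f;
         Vt = feat_cov Di f u u / d ^ 2;
         V = (vi + vj) / d ^ 2;
         Th = (feat_M4 Di f + feat_M4 Dj f) / d ^ 4;
         kap = lamT + lamS + lamQ;
         aT = 4 * kap / (real m * lamT);
         aS = kap / (real m * lamS);
         aQ = kap / (real m ^ 3 * lamQ);
         P = episode_space m Di Dj
     in measure P {\<omega> \<in> space P. margin m f \<omega> \<le> 0}
        \<le> (4 * Vt + aT * V ^ 2 + (aT / 4 + aS) * V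
            + aQ * (Th + 2 * (real m - 1) * V ^ 2))
          / (1 + (vj - vi) / (real m * d ^ 2)) ^ 2"
proof -
  define \<delta> where "\<delta> = feat_mean Dj f - feat_mean Di f"
  define d vi vj where "d = norm \<delta>" and "vi = feat_trcov Di f" and "vj = feat_trcov Dj f"
  define C where "C = feat_cov Di f ((1 / d) *\<^sub>R \<delta>) ((1 / d) *\<^sub>R \<delta>)"
  have d: "d > 0" and m: "m > 0"
    using assms(9,10) by (simp_all add: d_def \<delta>_def)
  have v: "vi \<ge> 0" "vj \<ge> 0"
    using prob_space.feat_trcov_eq_expectation[OF assms(1) assms(3,7)]
      prob_space.feat_trcov_eq_expectation[OF assms(2) assms(4,8)]
    by (simp_all add: vi_def vj_def)
  have "feat_cov Di f \<delta> \<delta> = d\<^sup>2 * C"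
    using d by (simp add: C_def feat_cov_scaleR power_divide)
  then have "measure (episode_space m Di Dj) {\<omega> \<in> space (episode_space m Di Dj). margin m f \<omega> \<le> 0}
    \<le> (4 * (d\<^sup>2 * C) + 4 * vi * (vi / m + vj / m)
      + (lamT + lamS + lamQ) * (d\<^sup>2 * (vj / m) / lamT + d\<^sup>2 * (vj / m) / lamS
        + ((feat_M4 Di f + 2 * (real m - 1) * vi\<^sup>2) / real m ^ 3
          + (feat_M4 Dj f + 2 * (real m - 1) * vj\<^sup>2) / real m ^ 3) / lamQ)) / (d\<^sup>2 + (vj - vi) / m)\<^sup>2"
    using prob_margin_nonpos_le[OF assms(1-4,7,8) m assms(12-14)] assms(11)
    unfolding \<delta>_def[symmetric] d_def[symmetric] vi_def[symmetric] vj_def[symmetric] by simp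
  also note margin_bound_normalize[OF d assms(9) v assms(12-14), of C "feat_M4 Di f" "feat_M4 Dj f"]
  finally show ?thesis
    unfolding Let_def \<delta>_def[symmetric] d_def[symmetric] vi_def[symmetric] vj_def[symmetric] C_def[symmetric]
    by (simp add: add_divide_distrib power4_eq_xxxx)
qed

end
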